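(* Let $0<a<b<1$ with $a+b=1$, let $m\in C^1([0,1])$ be non-constant and $c\in C([0,1])$, and assume (H1), (H2) and $m\in S_{\mathcal{D}}$. Then $\lim_{s\to+\infty}\lambda(s)=\lambda^{\mathcal{D}}$.
   Context: Fix an integer $d\ge1$. $\lambda(s)$ denotes the principal eigenvalue of $-\varphi''-\frac{d-1}{r}\varphi'-2s\,m'(r)\varphi'+c(r)\varphi=\lambda\varphi$ on $(0,1)$, $\varphi'(0)=\varphi'(1)=0$; equivalently $\lambda(s)=\min\{\int_0^1 r^{d-1}e^{2sm}(|\varphi'|^2+c\varphi^2)dr:\ \varphi\in H^1((0,1)),\ \int_0^1 r^{d-1}e^{2sm}\varphi^2dr=1\}$. $\lambda^{\mathcal{D}}$ (resp. $\lambda^{\mathcal{N}}$) is the principal eigenvalue of $-\varphi''-\frac{d-1}{r}\varphi'+c\varphi=\lambda\varphi$ on $(a,b)$ with Dirichlet (resp. Neumann) boundary conditions, i.e. the minimum of $\int_a^b r^{d-1}(|\varphi'|^2+c\varphi^2)dr$ over $\varphi\in H^1_0((a,b))$ (resp. $H^1((a,b))$) with $\int_a^b r^{d-1}\varphi^2dr=1$. (H1): $m(r)=m(1-r)$ on $[0,1]$ and $m\equiv0$ on $[a,b]$, where $a+b=1$. (H2): $c>0$ on $[0,1]$ and $c(r)>\lambda^{\mathcal{D}}$ for $r\in[0,a]\cup[b,1]$. Step function $\tilde m$: given $\delta\in(0,a)$, constants $0<h<\alpha<\beta<1<\nu$ and $l\in\mathbb{N}$ with $\sum_{i\ge1}(\alpha^{i+l}+\beta^{i+l})=a-\delta$,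 put $x_0=\delta$, $x_n=\delta+\sum_{i=1}^n(\alpha^{i+l}+\beta^{i+l})$ ($n\ge1$), $y_n=x_n+\alpha^{n+l+1}$ ($n\ge0$); define $\tilde m(r)=-h^n$ on $[x_n,y_n)$ and $\tilde m(r)=\nu h^n$ on $[y_n,x_{n+1})$ for $n\ge0$ (so on $[\delta,a)$), and $\tilde m(r)=\tilde m(1-r)$ for $r\in[b,1-\delta]$. $S_{\mathcal{D}}$: the set of $m\in C^1([0,1])$ such that, for some such $\delta,h,\alpha,\beta,\nu,l$, $m'$ changes sign only finitely many times in $[0,\delta)\cup(1-\delta,1]$ and $m(r)\ge\tilde m(r)$ for all $r\in[\delta,a]\cup[b,1-\delta]$. *)

theory Defs
  imports "HOL-Analysis.Analysis"
begin

text \<open>H^1((p,q)) pairs: phi is (the continuous representative of) an H^1 function and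
  dphi is its weak derivative, i.e. dphi is in L^2(p,q) and phi(x) = phi(p) + int_p^x dphi.\<close>
definition H1_pair :: "real \<Rightarrow> real \<Rightarrow> (real \<Rightarrow> real) \<Rightarrow> (real \<Rightarrow> real) \<Rightarrow> bool" where
  "H1_pair p q phi dphi \<longleftrightarrow>
     set_integrable lborel {p..q} dphi \<and>
     set_integrable lborel {p..q} (\<lambda>x. (dphi x)\<^sup>2) \<and>
     (\<forall>x\<in>{p..q}. phi x = phi p + (LBINT t:{p..x}. dphi t))"

definition H10_pair :: "real \<Rightarrow> real \<Rightarrow> (real \<Rightarrow> real) \<Rightarrow> (real \<Rightarrow> real) \<Rightarrow> bool" where
  "H10_pair p q phi dphi \<longleftrightarrow> H1_pair p q phi dphi \<and> phi p = 0 \<and> phi q = 0"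

definition lambda_s :: "nat \<Rightarrow> (real \<Rightarrow> real) \<Rightarrow> (real \<Rightarrow> real) \<Rightarrow> real \<Rightarrow> real" where
  "lambda_s d m c s = Inf {(LBINT r:{0..1}. r ^ (d - 1) * exp (2 * s * m r) * ((dphi r)\<^sup>2 + c r * (phi r)\<^sup>2))
       | phi dphi. H1_pair 0 1 phi dphi \<and>
           (LBINT r:{0..1}. r ^ (d - 1) * exp (2 * s * m r) * (phi r)\<^sup>2) = 1}"

definition lambda_D :: "nat \<Rightarrow> (real \<Rightarrow> real) \<Rightarrow> real \<Rightarrow> real \<Rightarrow> real" where
  "lambda_D d c a b = Inf {(LBINT r:{a..b}. r ^ (d - 1) * ((dphi r)\<^sup>2 + c r * (phi r)\<^sup>2))
       | phi dphi. H10_pair a b phi dphi \<and> (LBINT r:{a..b}. r ^ (d - 1) * (phi r)\<^sup>2) = 1}"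

definition lambda_N :: "nat \<Rightarrow> (real \<Rightarrow> real) \<Rightarrow> real \<Rightarrow> real \<Rightarrow> real" where
  "lambda_N d c a b = Inf {(LBINT r:{a..b}. r ^ (d - 1) * ((dphi r)\<^sup>2 + c r * (phi r)\<^sup>2))
       | phi dphi. H1_pair a b phi dphi \<and> (LBINT r:{a..b}. r ^ (d - 1) * (phi r)\<^sup>2) = 1}"

definition C1_deriv_on :: "real set \<Rightarrow> (real \<Rightarrow> real) \<Rightarrow> (real \<Rightarrow> real) \<Rightarrow> bool" where
  "C1_deriv_on S m m' \<longleftrightarrow> continuous_on S m' \<and>
     (\<forall>x\<in>S. (m has_real_derivative m' x) (at x within S))"

definition C1_on :: "real set \<Rightarrow> (real \<Rightarrow> real) \<Rightarrow> bool" where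
  "C1_on S m \<longleftrightarrow> (\<exists>m'. C1_deriv_on S m m')"

definition finitely_many_sign_changes :: "(real \<Rightarrow> real) \<Rightarrow> real set \<Rightarrow> real \<Rightarrow> real \<Rightarrow> bool" where
  "finitely_many_sign_changes f S p q \<longleftrightarrow>
     (\<exists>ts. ts \<noteq> [] \<and> sorted ts \<and> hd ts = p \<and> last ts = q \<and>
        (\<forall>i < length ts - 1.
           (\<forall>x \<in> {ts ! i .. ts ! Suc i} \<inter> S. 0 \<le> f x) \<or>
           (\<forall>x \<in> {ts ! i .. ts ! Suc i} \<inter> S. f x \<le> 0)))"

definition x_pt :: "real \<Rightarrow> real \<Rightarrow> real \<Rightarrow> nat \<Rightarrow> nat \<Rightarrow> real" where
  "x_pt \<delta> \<alpha> \<beta> l n = \<delta> + (\<Sum>i=1..n. \<alpha> ^ (i + l) + \<beta> ^ (i + l))"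

definition y_pt :: "real \<Rightarrow> real \<Rightarrow> real \<Rightarrow> nat \<Rightarrow> nat \<Rightarrow> real" where
  "y_pt \<delta> \<alpha> \<beta> l n = x_pt \<delta> \<alpha> \<beta> l n + \<alpha> ^ (n + l + 1)"

text \<open>Step function on [\<delta>,a) (the intervals [x_n,y_n), [y_n,x_{n+1}) are pairwise disjoint).\<close>
definition tilde_m_left :: "real \<Rightarrow> real \<Rightarrow> real \<Rightarrow> real \<Rightarrow> real \<Rightarrow> nat \<Rightarrow> real \<Rightarrow> real" where
  "tilde_m_left \<delta> h \<alpha> \<beta> \<nu> l r =
     (if \<exists>n. x_pt \<delta> \<alpha> \<beta> l n \<le> r \<and> r < y_pt \<delta> \<alpha> \<beta> l n
      then - (h ^ (SOME n. x_pt \<delta> \<alpha> \<beta> l n \<le> r \<and> r < y_pt \<delta> \<alpha> \<beta> l n))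
      else if \<exists>n. y_pt \<delta> \<alpha> \<beta> l n \<le> r \<and> r < x_pt \<delta> \<alpha> \<beta> l (Suc n)
      then \<nu> * h ^ (SOME n. y_pt \<delta> \<alpha> \<beta> l n \<le> r \<and> r < x_pt \<delta> \<alpha> \<beta> l (Suc n))
      else 0)"

definition tilde_m :: "real \<Rightarrow> real \<Rightarrow> real \<Rightarrow> real \<Rightarrow> real \<Rightarrow> nat \<Rightarrow> real \<Rightarrow> real" where
  "tilde_m \<delta> h \<alpha> \<beta> \<nu> l r =
     (if r < 1/2 then tilde_m_left \<delta> h \<alpha> \<beta> \<nu> l r else tilde_m_left \<delta> h \<alpha> \<beta> \<nu> l (1 - r))"

definition S_D :: "real \<Rightarrow> real \<Rightarrow> (real \<Rightarrow> real) set" where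
  "S_D a b = {m. \<exists>m'. C1_deriv_on {0..1} m m' \<and>
      (\<exists>\<delta> h \<alpha> \<beta> \<nu> (l::nat).
         0 < \<delta> \<and> \<delta> < a \<and> 0 < h \<and> h < \<alpha> \<and> \<alpha> < \<beta> \<and> \<beta> < 1 \<and> 1 < \<nu> \<and>
         (\<lambda>i. \<alpha> ^ (Suc i + l) + \<beta> ^ (Suc i + l)) sums (a - \<delta>) \<and>
         finitely_many_sign_changes m' {0..<\<delta>} 0 \<delta> \<and>
         finitely_many_sign_changes m' {1 - \<delta><..1} (1 - \<delta>) 1 \<and>
         (\<forall>r \<in> {\<delta>..<a} \<union> {b<..1 - \<delta>}. m r \<ge> tilde_m \<delta> h \<alpha> \<beta> \<nu> l r))}"

end

theory Submission
  imports Defs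
begin

(* Since m vanishes on [a, b], a Dirichlet eigenfunction of (a, b) extended by zero is admissible
   for every s, so lambda(s) <= lambda_D.

   Conversely, let phi be normalised for the weight r^(d-1) e^(2 s m) and let N, Q be its unweighted
   mass and energy on [a, b], where the weight is r^(d-1).  Since c > lambda_D off [a, b], the energy
   of phi is at least lambda_D (1 - N) + Q.  Subtracting from phi the linear function with the same
   values at a and b gives a Dirichlet function on (a, b), whence
   lambda_D N <= (1 + theta)^2 Q + C_theta (phi(a)^2 + phi(b)^2) for every theta > 0.

   So it suffices that phi(a) and phi(b) tend to 0 as s -> infinity, uniformly for phi of bounded
   energy.  Near a the profile satisfies m >= nu h^k on the step [y_k, x_(k+1)) and m >= -h^(k+1) on
   [y_k, a]: the first bound forces phi to be small somewhere on the step, the second keeps phi from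
   changing much between there and a (Cauchy-Schwarz).  Choosing k with 2 s h^k comparable to k
   makes both errors exponentially small in k; near b the same holds by symmetry. *)

section \<open>Set integrals over intervals\<close>

lemma set_integral_nonneg:
  "(\<And>x. x \<in> A \<Longrightarrow> 0 \<le> f x) \<Longrightarrow> 0 \<le> (LBINT x:A. (f x :: real))"
  unfolding set_lebesgue_integral_def
  by (intro integral_nonneg_AE) (auto simp: indicator_def)

lemma set_integral_mono_set:
  fixes f :: "real \<Rightarrow> real"
  assumes f: "set_integrable lborel A f" and BA: "B \<subseteq> A" and B: "B \<in> sets lborel"
    and nonneg: "\<And>x. x \<in> A \<Longrightarrow> 0 \<le> f x"
  shows "(LBINT x:B. f x) \<le> (LBINT x:A. f x)"
proof -
  have "set_integrable lborel B f" by (rule set_integrable_subset[OF f B BA])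
  then show ?thesis
    using f BA nonneg unfolding set_lebesgue_integral_def set_integrable_def
    by (intro integral_mono) (auto simp: indicator_def)
qed

lemma set_integral_const_interval:
  "x \<le> y \<Longrightarrow> (LBINT t:{x..y}. (k::real)) = (y - x) * k"
  by (simp add: set_integral_const)

lemma set_integrable_const_interval:
  "set_integrable lborel {x..y} (\<lambda>t::real. (k::real))"
  by (rule borel_integrable_atLeastAtMost') (rule continuous_on_const)

lemma set_integral_le_bound:
  fixes f :: "real \<Rightarrow> real"
  assumes "set_integrable lborel {x..y} f" "\<And>t. t \<in> {x..y} \<Longrightarrow> f t \<le> B"
    and "0 \<le> B" "x \<le> y" "y - x \<le> 1"
  shows "(LBINT t:{x..y}. f t) \<le> B"
proof -
  have "(LBINT t:{x..y}. f t) \<le> (LBINT t:{x..y}. B)"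
    using assms(1,2) by (intro set_integral_mono set_integrable_const_interval)
  also have "\<dots> = (y - x) * B" using assms(4) by (rule set_integral_const_interval)
  also have "\<dots> \<le> B" using assms(3-5) by (intro mult_left_le_one_le) auto
  finally show ?thesis .
qed

lemma set_integrable_continuous_mult:
  fixes f g :: "real \<Rightarrow> real"
  assumes f: "continuous_on {p..q} f" and g: "set_integrable lborel {p..q} g"
  shows "set_integrable lborel {p..q} (\<lambda>x. f x * g x)"
proof -
  obtain B where B: "\<And>x. x \<in> {p..q} \<Longrightarrow> \<bar>f x\<bar> \<le> B"
    using compact_imp_bounded[OF compact_continuous_image[OF f compact_Icc]]
    unfolding bounded_iff by (metis image_eqI real_norm_def)
  have "(\<lambda>x. indicator {p..q} x *\<^sub>R f x) \<in> borel_measurable lborel"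
    using borel_measurable_continuous_on_indicator[OF _ f] by simp
  moreover have "(\<lambda>x. indicator {p..q} x *\<^sub>R g x) \<in> borel_measurable lborel"
    using g unfolding set_integrable_def by (rule borel_measurable_integrable)
  moreover have "(\<lambda>x. indicator {p..q} x *\<^sub>R (f x * g x)) =
      (\<lambda>x. (indicator {p..q} x *\<^sub>R f x) * (indicator {p..q} x *\<^sub>R g x))"
    by (auto simp: indicator_def fun_eq_iff)
  ultimately have "set_borel_measurable lborel {p..q} (\<lambda>x. f x * g x)"
    unfolding set_borel_measurable_def by simp
  then show ?thesis
  proof (rule set_integrable_bound[rotated])
    show "set_integrable lborel {p..q} (\<lambda>x. B * g x)" using g by simp
    show "AE x in lborel. x \<in> {p..q} \<longrightarrow> norm (f x * g x) \<le> norm (B * g x)"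
    proof (intro AE_I2 impI)
      fix x assume "x \<in> {p..q}"
      then have "\<bar>f x\<bar> \<le> \<bar>B\<bar>" using B by force
      then show "norm (f x * g x) \<le> norm (B * g x)" by (simp add: abs_mult mult_right_mono)
    qed
  qed
qed

lemma
  fixes f :: "real \<Rightarrow> real"
  assumes "set_integrable lborel B f" "B \<subseteq> A"
  shows set_integrable_zero_extension: "set_integrable lborel A (\<lambda>x. indicator B x * f x)"
    and set_integral_zero_extension: "(LBINT x:A. indicator B x * f x) = (LBINT x:B. f x)"
proof -
  have eq: "(\<lambda>x. indicator A x *\<^sub>R (indicator B x * f x)) = (\<lambda>x. indicator B x *\<^sub>R f x)"
    using assms(2) by (auto simp: indicator_def fun_eq_iff)
  show "set_integrable lborel A (\<lambda>x. indicator B x * f x)"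
    using assms(1) unfolding set_integrable_def eq .
  show "(LBINT x:A. indicator B x * f x) = (LBINT x:B. f x)"
    unfolding set_lebesgue_integral_def eq ..
qed

text \<open>Cauchy--Schwarz for \<open>f\<close> and \<open>1\<close>, obtained from \<open>2 \<bar>u\<bar> \<le> \<tau> u\<^sup>2 + 1/\<tau>\<close> by optimising in \<open>\<tau>\<close>.\<close>

lemma sq_le_mult_of_AM_GM_bounds:
  fixes X L I :: real
  assumes "0 \<le> X" "0 \<le> L" "0 \<le> I" and bound: "\<And>\<tau>. 0 < \<tau> \<Longrightarrow> 2 * X \<le> \<tau> * I + L / \<tau>"
  shows "X\<^sup>2 \<le> L * I"
proof (cases "X = 0")
  case False
  then have X: "0 < X" using assms by simp
  show ?thesis
  proof (cases "L = 0")
    case True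
    have "2 * X \<le> X / (I + 1) * I" using bound[of "X / (I + 1)"] X assms True by simp
    also have "\<dots> \<le> X" using X assms by (simp add: field_simps)
    finally show ?thesis using X by simp
  next
    case False
    then have "2 * X \<le> L * I / X + X" using bound[of "L / X"] X assms by simp
    then have "X * X \<le> L * I" using X by (simp add: field_simps)
    then show ?thesis by (simp add: power2_eq_square)
  qed
qed (use assms in simp)

lemma set_integral_sq_le:
  fixes f :: "real \<Rightarrow> real"
  assumes f: "set_integrable lborel {x..y} f" and f2: "set_integrable lborel {x..y} (\<lambda>t. (f t)\<^sup>2)"
    and xy: "x \<le> y"
  shows "(LBINT t:{x..y}. f t)\<^sup>2 \<le> (y - x) * (LBINT t:{x..y}. (f t)\<^sup>2)"
proof -
  let ?X = "\<bar>LBINT t:{x..y}. f t\<bar>"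
  let ?I = "LBINT t:{x..y}. (f t)\<^sup>2"
  have "?X\<^sup>2 \<le> (y - x) * ?I"
  proof (rule sq_le_mult_of_AM_GM_bounds)
    fix \<tau> :: real assume \<tau>: "0 < \<tau>"
    have "2 * \<bar>u\<bar> \<le> \<tau> * u\<^sup>2 + 1 / \<tau>" for u :: real
    proof -
      have "0 \<le> (\<tau> * \<bar>u\<bar> - 1)\<^sup>2 / \<tau>" using \<tau> by simp
      then show ?thesis using \<tau> by (simp add: power2_eq_square field_simps)
    qed
    then have "(LBINT t:{x..y}. 2 * \<bar>f t\<bar>) \<le> (LBINT t:{x..y}. \<tau> * (f t)\<^sup>2 + 1 / \<tau>)"
      using f f2
      by (intro set_integral_mono) (auto intro!: set_integrable_abs set_integrable_const_interval)
    moreover have "2 * ?X \<le> (LBINT t:{x..y}. 2 * \<bar>f t\<bar>)"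
      using set_integral_norm_bound[OF f] by simp
    ultimately have "2 * ?X \<le> (LBINT t:{x..y}. \<tau> * (f t)\<^sup>2 + 1 / \<tau>)" by linarith
    also have "\<dots> = \<tau> * ?I + (y - x) / \<tau>"
      using xy f2 set_integrable_const_interval
      by (simp add: set_integral_const_interval)
    finally show "2 * ?X \<le> \<tau> * ?I + (y - x) / \<tau>" .
  qed (use xy in \<open>auto intro: set_integral_nonneg\<close>)
  then show ?thesis by simp
qed

section \<open>Sobolev pairs\<close>

lemma H1_pair_set_integrable:
  assumes "H1_pair p q phi dphi" "p \<le> x" "y \<le> q"
  shows "set_integrable lborel {x..y} dphi" "set_integrable lborel {x..y} (\<lambda>t. (dphi t)\<^sup>2)"
proof -
  have "{x..y} \<subseteq> {p..q}" using assms by auto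
  then show "set_integrable lborel {x..y} dphi" "set_integrable lborel {x..y} (\<lambda>t. (dphi t)\<^sup>2)"
    using assms(1) set_integrable_subset[of lborel "{p..q}" _ "{x..y}"]
    unfolding H1_pair_def by auto
qed

lemma H1_pair_increment:
  assumes H: "H1_pair p q phi dphi" and xy: "p \<le> x" "x \<le> y" "y \<le> q"
  shows "phi y - phi x = (LBINT t:{x..y}. dphi t)"
proof -
  have int: "set_integrable lborel {u..v} dphi" if "p \<le> u" "v \<le> q" for u v
    using H1_pair_set_integrable(1)[OF H that] .
  have eq: "(LBINT t:{u..v}. dphi t) = integral {u..v} dphi" if "p \<le> u" "v \<le> q" for u v
    using set_borel_integral_eq_integral(2)[OF int[OF that]] .
  have repr: "\<forall>z\<in>{p..q}. phi z = phi p + (LBINT t:{p..z}. dphi t)"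
    using H unfolding H1_pair_def by blast
  have phi_eq: "phi z = phi p + integral {p..z} dphi" if "p \<le> z" "z \<le> q" for z
    using bspec[OF repr, of z] that eq[of p z] by simp
  have "integral {p..x} dphi + integral {x..y} dphi = integral {p..y} dphi"
    using set_borel_integral_eq_integral(1)[OF int[of p y]] xy
    by (intro Henstock_Kurzweil_Integration.integral_combine) auto
  then show ?thesis
    using xy eq[of x y] phi_eq[of x] phi_eq[of y] by simp
qed

lemma H1_pair_continuous_on:
  assumes H: "H1_pair p q phi dphi"
  shows "continuous_on {p..q} phi"
proof -
  have "set_integrable lborel {p..q} dphi" using H unfolding H1_pair_def by blast
  then have "continuous_on {p..q} (\<lambda>x. phi p + integral {p..x} dphi)"
    by (intro continuous_intros indefinite_integral_continuous_1 set_borel_integral_eq_integral(1))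
  moreover have "phi p + integral {p..x} dphi = phi x" if "x \<in> {p..q}" for x
    using H1_pair_increment[OF H, of p x] H1_pair_set_integrable[OF H, of p x] that
    by (simp add: set_borel_integral_eq_integral(2))
  ultimately show ?thesis by (rule continuous_on_eq)
qed

lemma H1_pair_restrict:
  assumes H: "H1_pair p q phi dphi" and "p \<le> x" "x \<le> y" "y \<le> q"
  shows "H1_pair x y phi dphi"
  unfolding H1_pair_def
proof (intro conjI ballI)
  show "set_integrable lborel {x..y} dphi" "set_integrable lborel {x..y} (\<lambda>t. (dphi t)\<^sup>2)"
    using H1_pair_set_integrable[OF H, of x y] assms by auto
  fix z assume "z \<in> {x..y}"
  then show "phi z = phi x + (LBINT t:{x..z}. dphi t)"
    using H1_pair_increment[OF H, of x z] assms by simp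
qed

lemma H1_pair_sq_increment_le:
  assumes H: "H1_pair p q phi dphi" and uv: "p \<le> u" "u \<le> v" "v \<le> q"
  shows "(phi v - phi u)\<^sup>2 \<le> (v - u) * (LBINT t:{u..v}. (dphi t)\<^sup>2)"
  unfolding H1_pair_increment[OF H uv]
  using H1_pair_set_integrable[OF H, of u v] uv by (intro set_integral_sq_le) auto

lemma H10_pair_mult:
  assumes "H10_pair a b psi dpsi"
  shows "H10_pair a b (\<lambda>r. psi r * k) (\<lambda>r. dpsi r * k)"
proof -
  have H: "H1_pair a b psi dpsi" and "psi a = 0" "psi b = 0"
    using assms unfolding H10_pair_def by auto
  have "H1_pair a b (\<lambda>r. psi r * k) (\<lambda>r. dpsi r * k)"
    unfolding H1_pair_def
  proof (intro conjI ballI)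
    show "set_integrable lborel {a..b} (\<lambda>r. dpsi r * k)"
      using H unfolding H1_pair_def by simp
    have "(\<lambda>r. (dpsi r * k)\<^sup>2) = (\<lambda>r. (dpsi r)\<^sup>2 * k\<^sup>2)" by (simp add: power_mult_distrib)
    then show "set_integrable lborel {a..b} (\<lambda>r. (dpsi r * k)\<^sup>2)"
      using H unfolding H1_pair_def by simp
    fix x assume "x \<in> {a..b}"
    then show "psi x * k = psi a * k + (LBINT t:{a..x}. dpsi t * k)"
      using H1_pair_increment[OF H, of a x] by (simp add: algebra_simps)
  qed
  then show ?thesis using \<open>psi a = 0\<close> \<open>psi b = 0\<close> unfolding H10_pair_def by simp
qed

lemma H1_pair_if_has_derivative:
  assumes "continuous_on {p..q} df"
    and "\<And>t. t \<in> {p..q} \<Longrightarrow> (f has_real_derivative df t) (at t within {p..q})"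
  shows "H1_pair p q f df"
  unfolding H1_pair_def
proof (intro conjI ballI)
  show "set_integrable lborel {p..q} df" "set_integrable lborel {p..q} (\<lambda>x. (df x)\<^sup>2)"
    using assms(1) by (auto intro!: borel_integrable_atLeastAtMost' continuous_intros)
  fix x assume x: "x \<in> {p..q}"
  have "(f has_vector_derivative df t) (at t within {p..x})" if "t \<in> {p..x}" for t
    unfolding has_real_derivative_iff_has_vector_derivative[symmetric]
    by (rule DERIV_subset[OF assms(2)]) (use that x in auto)
  then have "(LBINT t:{p..x}. df t) = f x - f p"
    unfolding set_lebesgue_integral_def using x assms(1)
    by (intro integral_FTC_atLeastAtMost) (auto intro: continuous_on_subset)
  then show "f x = f p + (LBINT t:{p..x}. df t)" by simp
qed

lemma H1_pair_affine: "H1_pair p q (\<lambda>r. u + k * (r - p)) (\<lambda>r. k)"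
  by (rule H1_pair_if_has_derivative) (auto intro!: derivative_eq_intros)

lemma H1_pair_minus_affine:
  assumes H: "H1_pair p q phi dphi"
  shows "H1_pair p q (\<lambda>r. phi r - (u + k * (r - p))) (\<lambda>r. dphi r - k)"
  unfolding H1_pair_def
proof (intro conjI ballI)
  have int: "set_integrable lborel {p..q} dphi" "set_integrable lborel {p..q} (\<lambda>r. (dphi r)\<^sup>2)"
    using H unfolding H1_pair_def by auto
  then show "set_integrable lborel {p..q} (\<lambda>r. dphi r - k)"
    by (intro set_integral_diff(1) set_integrable_const_interval)
  have "(\<lambda>r. (dphi r - k)\<^sup>2) = (\<lambda>r. (dphi r)\<^sup>2 + (- 2 * k) * dphi r + k\<^sup>2)"
    by (auto simp: power2_eq_square algebra_simps fun_eq_iff)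
  moreover have "set_integrable lborel {p..q} (\<lambda>r. (dphi r)\<^sup>2 + (- 2 * k) * dphi r + k\<^sup>2)"
    using int by (intro set_integral_add(1) set_integrable_mult_right set_integrable_const_interval)
  ultimately show "set_integrable lborel {p..q} (\<lambda>r. (dphi r - k)\<^sup>2)" by simp
  fix x assume x: "x \<in> {p..q}"
  have "(LBINT t:{p..x}. dphi t - k) = (LBINT t:{p..x}. dphi t) - (LBINT t:{p..x}. k)"
    using H1_pair_set_integrable(1)[OF H, of p x] x
    by (intro set_integral_diff(2) set_integrable_const_interval) auto
  also have "\<dots> = phi x - phi p - (x - p) * k"
    using H1_pair_increment[OF H, of p x] x by (simp add: set_integral_const_interval)
  finally show "phi x - (u + k * (x - p)) = phi p - (u + k * (p - p)) + (LBINT t:{p..x}. dphi t - k)"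
    by (simp add: algebra_simps)
qed

lemma H10_pair_minus_interpolant:
  assumes H: "H1_pair p q phi dphi" and "p < q"
  defines "k \<equiv> (phi q - phi p) / (q - p)"
  shows "H10_pair p q (\<lambda>r. phi r - (phi p + k * (r - p))) (\<lambda>r. dphi r - k)"
proof -
  have "phi q - (phi p + k * (q - p)) = 0" unfolding k_def using \<open>p < q\<close> by simp
  then show ?thesis using H1_pair_minus_affine[OF H] unfolding H10_pair_def by simp
qed

section \<open>The Dirichlet eigenvalue\<close>

definition dirichlet_energies :: "nat \<Rightarrow> (real \<Rightarrow> real) \<Rightarrow> real \<Rightarrow> real \<Rightarrow> real set" where
  "dirichlet_energies d c a b = {(LBINT r:{a..b}. r ^ (d - 1) * ((dphi r)\<^sup>2 + c r * (phi r)\<^sup>2))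
       | phi dphi. H10_pair a b phi dphi \<and> (LBINT r:{a..b}. r ^ (d - 1) * (phi r)\<^sup>2) = 1}"

lemma lambda_D_eq_Inf: "lambda_D d c a b = Inf (dirichlet_energies d c a b)"
  unfolding lambda_D_def dirichlet_energies_def ..

locale dirichlet_problem =
  fixes a b :: real and c :: "real \<Rightarrow> real" and d :: nat
  assumes a_pos: "0 < a" and a_less_b: "a < b" and c_pos: "\<forall>r\<in>{a..b}. 0 < c r"
    and c_cont: "continuous_on {a..b} c"
begin

lemma c_nonneg: "r \<in> {a..b} \<Longrightarrow> 0 \<le> c r"
  using c_pos by (simp add: less_imp_le)

lemma c_upper_bound_nonneg:
  assumes "\<forall>r\<in>{a..b}. c r \<le> Cm"
  shows "0 \<le> Cm"
proof -
  have "a \<in> {a..b}" using a_less_b by simp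
  then show ?thesis using assms c_nonneg by (meson order_trans)
qed

lemma energy_nonneg: "0 \<le> (LBINT r:{a..b}. r ^ (d - 1) * ((dphi r)\<^sup>2 + c r * (phi r)\<^sup>2))"
  using a_pos c_nonneg by (intro set_integral_nonneg) auto

lemma bdd_below_dirichlet_energies: "bdd_below (dirichlet_energies d c a b)"
  unfolding dirichlet_energies_def bdd_below_def using energy_nonneg by blast

lemma lambda_D_mult_mass_le:
  assumes H: "H10_pair a b psi dpsi"
  shows "lambda_D d c a b * (LBINT r:{a..b}. r ^ (d - 1) * (psi r)\<^sup>2)
     \<le> (LBINT r:{a..b}. r ^ (d - 1) * ((dpsi r)\<^sup>2 + c r * (psi r)\<^sup>2))"
proof -
  define N where "N = (LBINT r:{a..b}. r ^ (d - 1) * (psi r)\<^sup>2)"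
  define Q where "Q = (LBINT r:{a..b}. r ^ (d - 1) * ((dpsi r)\<^sup>2 + c r * (psi r)\<^sup>2))"
  have "0 \<le> N" unfolding N_def using a_pos by (intro set_integral_nonneg) auto
  show ?thesis
  proof (cases "N = 0")
    case True then show ?thesis using energy_nonneg unfolding N_def[symmetric] by simp
  next
    case False
    with \<open>0 \<le> N\<close> have N: "0 < N" by simp
    define k where "k = 1 / sqrt N"
    have k2: "k\<^sup>2 = 1 / N" unfolding k_def using N by (simp add: power_divide)
    have "(LBINT r:{a..b}. r ^ (d - 1) * (psi r * k)\<^sup>2) = k\<^sup>2 * N"
      unfolding N_def by (simp add: power_mult_distrib algebra_simps)
    moreover have "(\<lambda>r. r ^ (d - 1) * ((dpsi r * k)\<^sup>2 + c r * (psi r * k)\<^sup>2))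
        = (\<lambda>r. k\<^sup>2 * (r ^ (d - 1) * ((dpsi r)\<^sup>2 + c r * (psi r)\<^sup>2)))"
      by (simp add: fun_eq_iff power_mult_distrib algebra_simps)
    then have "(LBINT r:{a..b}. r ^ (d - 1) * ((dpsi r * k)\<^sup>2 + c r * (psi r * k)\<^sup>2)) = k\<^sup>2 * Q"
      unfolding Q_def by simp
    ultimately have "Q / N \<in> dirichlet_energies d c a b"
      unfolding dirichlet_energies_def using H10_pair_mult[OF H, of k] k2 N by force
    then have "lambda_D d c a b \<le> Q / N"
      unfolding lambda_D_eq_Inf by (rule cInf_lower[OF _ bdd_below_dirichlet_energies])
    then show ?thesis using N unfolding N_def[symmetric] Q_def[symmetric] by (simp add: field_simps)
  qed
qed

lemma dirichlet_energies_nonempty: "dirichlet_energies d c a b \<noteq> {}"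
proof -
  define f where "f r = (r - a) * (b - r)" for r
  have "H1_pair a b f (\<lambda>r. a + b - 2 * r)"
    unfolding f_def
    by (rule H1_pair_if_has_derivative) (auto intro!: derivative_eq_intros continuous_intros)
  then have H: "H10_pair a b f (\<lambda>r. a + b - 2 * r)" unfolding H10_pair_def by (simp add: f_def)
  define g where "g r = r ^ (d - 1) * (f r)\<^sup>2" for r
  have g_cont: "continuous_on {a..b} g" unfolding g_def f_def by (intro continuous_intros)
  define N where "N = (LBINT r:{a..b}. g r)"
  have N_eq: "N = integral {a..b} g"
    unfolding N_def using g_cont
    by (intro set_borel_integral_eq_integral(2) borel_integrable_atLeastAtMost')
  have "0 \<le> N" unfolding N_def g_def using a_pos by (intro set_integral_nonneg) auto
  moreover have "N \<noteq> 0"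
  proof
    assume "N = 0"
    then have "(g has_integral 0) (cbox a b)"
      using N_eq integrable_continuous_interval[OF g_cont] by (metis cbox_interval has_integral_integral)
    then have "g ((a + b) / 2) = 0"
      using a_less_b g_cont a_pos
      by (intro has_integral_0_cbox_imp_0[of a b g]) (auto simp: g_def)
    then show False using a_pos a_less_b by (simp add: g_def f_def)
  qed
  ultimately have N: "0 < N" by simp
  define k where "k = 1 / sqrt N"
  have "(LBINT r:{a..b}. r ^ (d - 1) * (f r * k)\<^sup>2) = k\<^sup>2 * N"
    unfolding N_def g_def by (simp add: power_mult_distrib algebra_simps)
  also have "\<dots> = 1" unfolding k_def using N by (simp add: power_divide)
  finally show ?thesis
    unfolding dirichlet_energies_def using H10_pair_mult[OF H, of k] by blast
qed

lemma lambda_D_nonneg: "0 \<le> lambda_D d c a b"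
  unfolding lambda_D_eq_Inf dirichlet_energies_def
  using dirichlet_energies_nonempty energy_nonneg
  by (intro cInf_greatest) (auto simp: dirichlet_energies_def)

end

section \<open>The upper bound\<close>

definition weighted_energies :: "nat \<Rightarrow> (real \<Rightarrow> real) \<Rightarrow> (real \<Rightarrow> real) \<Rightarrow> real \<Rightarrow> real set" where
  "weighted_energies d m c s =
     {(LBINT r:{0..1}. r ^ (d - 1) * exp (2 * s * m r) * ((dphi r)\<^sup>2 + c r * (phi r)\<^sup>2))
       | phi dphi. H1_pair 0 1 phi dphi \<and>
           (LBINT r:{0..1}. r ^ (d - 1) * exp (2 * s * m r) * (phi r)\<^sup>2) = 1}"

lemma lambda_s_eq_Inf: "lambda_s d m c s = Inf (weighted_energies d m c s)"
  unfolding lambda_s_def weighted_energies_def ..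

lemma bdd_below_weighted_energies:
  assumes "\<forall>r\<in>{0..1}. 0 < c r"
  shows "bdd_below (weighted_energies d m c s)"
proof -
  have "0 \<le> (LBINT r:{0..1}. r ^ (d - 1) * exp (2 * s * m r) * ((dphi r)\<^sup>2 + c r * (phi r)\<^sup>2))"
    for phi dphi :: "real \<Rightarrow> real"
    using assms by (intro set_integral_nonneg) (auto simp: less_imp_le)
  then show ?thesis unfolding weighted_energies_def bdd_below_def by blast
qed

lemma H10_pair_zero_extension:
  assumes H: "H10_pair a b phi dphi" and ab: "p \<le> a" "a \<le> b" "b \<le> q"
  shows "H1_pair p q (\<lambda>r. indicator {a..b} r * phi r) (\<lambda>r. indicator {a..b} r * dphi r)"
  unfolding H1_pair_def
proof (intro conjI ballI)
  have H1: "H1_pair a b phi dphi" and "phi a = 0" "phi b = 0"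
    using H unfolding H10_pair_def by auto
  have sub: "{a..b} \<subseteq> {p..q}" using ab by auto
  show "set_integrable lborel {p..q} (\<lambda>r. indicator {a..b} r * dphi r)"
    using H1 unfolding H1_pair_def by (intro set_integrable_zero_extension sub) auto
  have "(\<lambda>r. (indicator {a..b} r * dphi r)\<^sup>2) = (\<lambda>r. indicator {a..b} r * (dphi r)\<^sup>2)"
    by (auto simp: indicator_def fun_eq_iff)
  then show "set_integrable lborel {p..q} (\<lambda>r. (indicator {a..b} r * dphi r)\<^sup>2)"
    using H1 sub set_integrable_zero_extension unfolding H1_pair_def by metis
  fix x assume x: "x \<in> {p..q}"
  have "(LBINT t:{p..x}. indicator {a..b} t * dphi t) = (LBINT t:{max a p..min b x}. dphi t)"
    unfolding set_lebesgue_integral_def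
    by (rule arg_cong[where f = "integral\<^sup>L lborel"]) (auto simp: indicator_def fun_eq_iff)
  also have "\<dots> = indicator {a..b} x * phi x"
  proof (cases "x < a")
    case True
    then show ?thesis by (simp add: set_lebesgue_integral_def indicator_def)
  next
    case False
    then show ?thesis
      using H1_pair_increment[OF H1, of a "min b x"] ab \<open>phi a = 0\<close> \<open>phi b = 0\<close>
      by (auto simp: indicator_def min_def)
  qed
  finally show "indicator {a..b} x * phi x
      = indicator {a..b} p * phi p + (LBINT t:{p..x}. indicator {a..b} t * dphi t)"
    using ab \<open>phi a = 0\<close> by (auto simp: indicator_def)
qed

lemma dirichlet_energies_subset_weighted_energies:
  assumes ab: "0 \<le> a" "a \<le> b" "b \<le> 1" and m_zero: "\<forall>r\<in>{a..b}. m r = 0"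
  shows "dirichlet_energies d c a b \<subseteq> weighted_energies d m c s"
proof
  fix v assume "v \<in> dirichlet_energies d c a b"
  then obtain phi dphi where H: "H10_pair a b phi dphi"
    and mass: "(LBINT r:{a..b}. r ^ (d - 1) * (phi r)\<^sup>2) = 1"
    and v: "v = (LBINT r:{a..b}. r ^ (d - 1) * ((dphi r)\<^sup>2 + c r * (phi r)\<^sup>2))"
    unfolding dirichlet_energies_def by blast
  define phi0 where "phi0 r = indicator {a..b} r * phi r" for r
  define dphi0 where "dphi0 r = indicator {a..b} r * dphi r" for r
  have "(LBINT r:{0..1}. r ^ (d - 1) * exp (2 * s * m r) * (phi0 r)\<^sup>2)
      = (LBINT r:{a..b}. r ^ (d - 1) * (phi r)\<^sup>2)"
    "(LBINT r:{0..1}. r ^ (d - 1) * exp (2 * s * m r) * ((dphi0 r)\<^sup>2 + c r * (phi0 r)\<^sup>2)) = v"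
    unfolding v set_lebesgue_integral_def phi0_def dphi0_def
    using ab m_zero
    by (auto intro!: arg_cong[where f = "integral\<^sup>L lborel"] simp: indicator_def fun_eq_iff)
  moreover have "H1_pair 0 1 phi0 dphi0"
    unfolding phi0_def dphi0_def using H ab by (rule H10_pair_zero_extension)
  ultimately show "v \<in> weighted_energies d m c s"
    unfolding weighted_energies_def using mass by force
qed

lemma (in dirichlet_problem) lambda_s_le_lambda_D:
  assumes "b \<le> 1" "\<forall>r\<in>{a..b}. m r = 0" "\<forall>r\<in>{0..1}. 0 < c r"
  shows "lambda_s d m c s \<le> lambda_D d c a b"
  unfolding lambda_s_eq_Inf lambda_D_eq_Inf
  using dirichlet_energies_subset_weighted_energies[of a b m] assms a_pos a_less_b
  by (intro cInf_superset_mono dirichlet_energies_nonempty bdd_below_weighted_energies) auto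

section \<open>Removing the boundary values on \<open>[a, b]\<close>\<close>

lemma sq_add_le_Young:
  fixes x y \<theta> :: real
  assumes "0 < \<theta>"
  shows "(x + y)\<^sup>2 \<le> (1 + \<theta>) * x\<^sup>2 + (1 + 1 / \<theta>) * y\<^sup>2"
proof -
  have "0 \<le> (\<theta> * x - y)\<^sup>2 / \<theta>" using assms by simp
  then show ?thesis using assms by (simp add: power2_eq_square field_simps)
qed

lemma set_integral_le_lincomb:
  fixes f g h :: "real \<Rightarrow> real"
  assumes "set_integrable lborel A f" "set_integrable lborel A g" "set_integrable lborel A h"
    and "\<And>x. x \<in> A \<Longrightarrow> f x \<le> \<alpha> * g x + \<beta> * h x"
  shows "(LBINT x:A. f x) \<le> \<alpha> * (LBINT x:A. g x) + \<beta> * (LBINT x:A. h x)"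
proof -
  have "(LBINT x:A. f x) \<le> (LBINT x:A. \<alpha> * g x + \<beta> * h x)"
    using assms by (intro set_integral_mono) auto
  also have "\<dots> = \<alpha> * (LBINT x:A. g x) + \<beta> * (LBINT x:A. h x)"
    using assms by (subst set_integral_add(2)) auto
  finally show ?thesis .
qed

lemma affine_interpolant_sq_le:
  fixes u v :: real
  assumes "a < b" "r \<in> {a..b}"
  shows "(u + (v - u) / (b - a) * (r - a))\<^sup>2 \<le> 2 * (u\<^sup>2 + v\<^sup>2)"
    and "((v - u) / (b - a))\<^sup>2 \<le> 2 * (u\<^sup>2 + v\<^sup>2) / (b - a)\<^sup>2"
proof -
  define t where "t = (r - a) / (b - a)"
  have t: "0 \<le> t" "t \<le> 1" unfolding t_def using assms by auto
  have "(v - u) / (b - a) * (r - a) = t * (v - u)" unfolding t_def by simp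
  then have "u + (v - u) / (b - a) * (r - a) = (1 - t) * u + t * v"
    by (simp add: algebra_simps)
  moreover have "((1 - t) * u + t * v)\<^sup>2 \<le> 2 * ((1 - t) * u)\<^sup>2 + 2 * (t * v)\<^sup>2"
    using sq_add_le_Young[of 1 "(1 - t) * u" "t * v"] by simp
  moreover have "(1 - t)\<^sup>2 \<le> 1" "t\<^sup>2 \<le> 1" using t by (auto intro: power_le_one)
  then have "((1 - t) * u)\<^sup>2 \<le> u\<^sup>2" "(t * v)\<^sup>2 \<le> v\<^sup>2"
    unfolding power_mult_distrib by (auto intro: mult_left_le_one_le)
  ultimately show "(u + (v - u) / (b - a) * (r - a))\<^sup>2 \<le> 2 * (u\<^sup>2 + v\<^sup>2)" by simp
  have "(v - u)\<^sup>2 \<le> 2 * (u\<^sup>2 + v\<^sup>2)" using sq_add_le_Young[of 1 v "- u"] by simp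
  then show "((v - u) / (b - a))\<^sup>2 \<le> 2 * (u\<^sup>2 + v\<^sup>2) / (b - a)\<^sup>2"
    unfolding power_divide using assms(1) by (intro divide_right_mono) auto
qed

context dirichlet_problem
begin

lemma mass_integrable:
  "continuous_on {a..b} phi \<Longrightarrow> set_integrable lborel {a..b} (\<lambda>r. r ^ (d - 1) * (phi r)\<^sup>2)"
  by (intro borel_integrable_atLeastAtMost' continuous_intros)

lemma energy_integrable:
  assumes H: "H1_pair a b phi dphi"
  shows "set_integrable lborel {a..b} (\<lambda>r. r ^ (d - 1) * ((dphi r)\<^sup>2 + c r * (phi r)\<^sup>2))"
proof -
  have "set_integrable lborel {a..b} (\<lambda>r. r ^ (d - 1) * (dphi r)\<^sup>2)"
    using H unfolding H1_pair_def by (intro set_integrable_continuous_mult continuous_intros) auto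
  moreover have "set_integrable lborel {a..b} (\<lambda>r. r ^ (d - 1) * (c r * (phi r)\<^sup>2))"
    using c_cont H1_pair_continuous_on[OF H]
    by (intro borel_integrable_atLeastAtMost' continuous_intros)
  ultimately show ?thesis by (simp add: distrib_left)
qed

lemma affine_interpolant_bounds:
  fixes u v :: real
  assumes b_le: "b \<le> 1" and c_le: "\<forall>r\<in>{a..b}. c r \<le> Cm"
  defines "k \<equiv> (v - u) / (b - a)" and "K \<equiv> 2 / (b - a)\<^sup>2 + 2 * Cm + 2"
  shows "(LBINT r:{a..b}. r ^ (d - 1) * (u + k * (r - a))\<^sup>2) \<le> K * (u\<^sup>2 + v\<^sup>2)"
    and "(LBINT r:{a..b}. r ^ (d - 1) * (k\<^sup>2 + c r * (u + k * (r - a))\<^sup>2)) \<le> K * (u\<^sup>2 + v\<^sup>2)"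
proof -
  define S where "S = u\<^sup>2 + v\<^sup>2"
  have "0 \<le> Cm" using c_le by (rule c_upper_bound_nonneg)
  then have KS: "0 \<le> K * S" unfolding K_def S_def by simp
  have interval: "a \<le> b" "b - a \<le> 1" using a_pos a_less_b b_le by auto
  have w: "0 \<le> r ^ (d - 1)" "r ^ (d - 1) \<le> 1" if "r \<in> {a..b}" for r
    using that a_pos b_le by (auto intro: power_le_one)
  have l2: "(u + k * (r - a))\<^sup>2 \<le> 2 * S" and k2: "k\<^sup>2 \<le> 2 * S / (b - a)\<^sup>2" if "r \<in> {a..b}" for r
    using affine_interpolant_sq_le[OF a_less_b that, where u = u and v = v]
    unfolding k_def S_def by simp_all
  show "(LBINT r:{a..b}. r ^ (d - 1) * (u + k * (r - a))\<^sup>2) \<le> K * S"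
  proof (rule set_integral_le_bound[OF _ _ KS interval])
    fix r assume r: "r \<in> {a..b}"
    have "r ^ (d - 1) * (u + k * (r - a))\<^sup>2 \<le> 2 * S"
      using mult_mono[OF w(2)[OF r] l2[OF r]] by simp
    also have "\<dots> \<le> K * S"
      using \<open>0 \<le> Cm\<close> unfolding K_def S_def by (simp add: algebra_simps)
    finally show "r ^ (d - 1) * (u + k * (r - a))\<^sup>2 \<le> K * S" .
  qed (intro borel_integrable_atLeastAtMost' continuous_intros)
  show "(LBINT r:{a..b}. r ^ (d - 1) * (k\<^sup>2 + c r * (u + k * (r - a))\<^sup>2)) \<le> K * S"
  proof (rule set_integral_le_bound[OF _ _ KS interval])
    fix r assume r: "r \<in> {a..b}"
    have "c r * (u + k * (r - a))\<^sup>2 \<le> Cm * (2 * S)"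
      using c_le c_nonneg[OF r] l2[OF r] r \<open>0 \<le> Cm\<close> by (intro mult_mono) auto
    then have "k\<^sup>2 + c r * (u + k * (r - a))\<^sup>2 \<le> 2 * S / (b - a)\<^sup>2 + Cm * (2 * S)"
      using k2[OF r] by linarith
    also have "\<dots> \<le> K * S"
      unfolding K_def S_def by (simp add: algebra_simps add_divide_distrib)
    finally have "k\<^sup>2 + c r * (u + k * (r - a))\<^sup>2 \<le> K * S" .
    moreover have "0 \<le> k\<^sup>2 + c r * (u + k * (r - a))\<^sup>2" using c_nonneg[OF r] by simp
    ultimately show "r ^ (d - 1) * (k\<^sup>2 + c r * (u + k * (r - a))\<^sup>2) \<le> K * S"
      using w[OF r] by (meson mult_left_le_one_le order_trans)
  qed (use c_cont in \<open>intro borel_integrable_atLeastAtMost' continuous_intros\<close>)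
qed

lemma mass_add_le_Young:
  assumes "continuous_on {a..b} f" "continuous_on {a..b} g" "0 < \<theta>"
  shows "(LBINT r:{a..b}. r ^ (d - 1) * (f r + g r)\<^sup>2)
    \<le> (1 + \<theta>) * (LBINT r:{a..b}. r ^ (d - 1) * (f r)\<^sup>2)
      + (1 + 1 / \<theta>) * (LBINT r:{a..b}. r ^ (d - 1) * (g r)\<^sup>2)"
proof (rule set_integral_le_lincomb)
  fix r assume "r \<in> {a..b}"
  then have "0 \<le> r ^ (d - 1)" using a_pos by simp
  from mult_left_mono[OF sq_add_le_Young[OF \<open>0 < \<theta>\<close>, of "f r" "g r"] this]
  show "r ^ (d - 1) * (f r + g r)\<^sup>2
      \<le> (1 + \<theta>) * (r ^ (d - 1) * (f r)\<^sup>2) + (1 + 1 / \<theta>) * (r ^ (d - 1) * (g r)\<^sup>2)"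
    by (simp only: distrib_left mult.left_commute)
qed (rule mass_integrable; intro continuous_intros assms(1,2))+

lemma energy_diff_le_Young:
  assumes "H1_pair a b f df" "H1_pair a b g dg" "H1_pair a b (\<lambda>r. f r - g r) (\<lambda>r. df r - dg r)"
    and "0 < \<theta>"
  shows "(LBINT r:{a..b}. r ^ (d - 1) * ((df r - dg r)\<^sup>2 + c r * (f r - g r)\<^sup>2))
    \<le> (1 + \<theta>) * (LBINT r:{a..b}. r ^ (d - 1) * ((df r)\<^sup>2 + c r * (f r)\<^sup>2))
      + (1 + 1 / \<theta>) * (LBINT r:{a..b}. r ^ (d - 1) * ((dg r)\<^sup>2 + c r * (g r)\<^sup>2))"
proof (rule set_integral_le_lincomb[OF energy_integrable[OF assms(3)] energy_integrable[OF assms(1)]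
      energy_integrable[OF assms(2)]])
  fix r assume r: "r \<in> {a..b}"
  have "c r * (f r + - g r)\<^sup>2 \<le> c r * ((1 + \<theta>) * (f r)\<^sup>2 + (1 + 1 / \<theta>) * (- g r)\<^sup>2)"
    using c_nonneg[OF r] by (intro mult_left_mono sq_add_le_Young \<open>0 < \<theta>\<close>)
  then have "(df r - dg r)\<^sup>2 + c r * (f r - g r)\<^sup>2
      \<le> (1 + \<theta>) * ((df r)\<^sup>2 + c r * (f r)\<^sup>2) + (1 + 1 / \<theta>) * ((dg r)\<^sup>2 + c r * (g r)\<^sup>2)"
    using sq_add_le_Young[OF \<open>0 < \<theta>\<close>, of "df r" "- dg r"] by (simp add: algebra_simps)
  moreover have "0 \<le> r ^ (d - 1)" using r a_pos by simp
  ultimately have "r ^ (d - 1) * ((df r - dg r)\<^sup>2 + c r * (f r - g r)\<^sup>2)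
      \<le> r ^ (d - 1) * ((1 + \<theta>) * ((df r)\<^sup>2 + c r * (f r)\<^sup>2) + (1 + 1 / \<theta>) * ((dg r)\<^sup>2 + c r * (g r)\<^sup>2))"
    by (rule mult_left_mono)
  then show "r ^ (d - 1) * ((df r - dg r)\<^sup>2 + c r * (f r - g r)\<^sup>2)
      \<le> (1 + \<theta>) * (r ^ (d - 1) * ((df r)\<^sup>2 + c r * (f r)\<^sup>2))
        + (1 + 1 / \<theta>) * (r ^ (d - 1) * ((dg r)\<^sup>2 + c r * (g r)\<^sup>2))"
    by (simp only: distrib_left mult.left_commute)
qed

lemma lambda_D_mult_mass_le_energy_plus_boundary:
  assumes b_le: "b \<le> 1" and c_le: "\<forall>r\<in>{a..b}. c r \<le> Cm"
    and H: "H1_pair a b phi dphi" and \<theta>: "0 < \<theta>"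
  shows "lambda_D d c a b * (LBINT r:{a..b}. r ^ (d - 1) * (phi r)\<^sup>2)
     \<le> (1 + \<theta>)\<^sup>2 * (LBINT r:{a..b}. r ^ (d - 1) * ((dphi r)\<^sup>2 + c r * (phi r)\<^sup>2))
       + (1 + 1 / \<theta>) * (1 + \<theta> + lambda_D d c a b) * (2 / (b - a)\<^sup>2 + 2 * Cm + 2)
         * ((phi a)\<^sup>2 + (phi b)\<^sup>2)"
proof -
  define LD where "LD = lambda_D d c a b"
  define B where "B = (2 / (b - a)\<^sup>2 + 2 * Cm + 2) * ((phi a)\<^sup>2 + (phi b)\<^sup>2)"
  define N where "N f = (LBINT r:{a..b}. r ^ (d - 1) * (f r)\<^sup>2)" for f
  define Q where "Q f df = (LBINT r:{a..b}. r ^ (d - 1) * ((df r)\<^sup>2 + c r * (f r)\<^sup>2))" for f df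
  define k where "k = (phi b - phi a) / (b - a)"
  define l where "l r = phi a + k * (r - a)" for r
  have Hl: "H1_pair a b l (\<lambda>r. k)" unfolding l_def by (rule H1_pair_affine)
  have H0: "H10_pair a b (\<lambda>r. phi r - l r) (\<lambda>r. dphi r - k)"
    unfolding l_def k_def by (rule H10_pair_minus_interpolant[OF H a_less_b])
  then have H0': "H1_pair a b (\<lambda>r. phi r - l r) (\<lambda>r. dphi r - k)" unfolding H10_pair_def by simp
  have Nc: "N phi \<le> (1 + \<theta>) * N (\<lambda>r. phi r - l r) + (1 + 1 / \<theta>) * N l"
    using mass_add_le_Young[OF H1_pair_continuous_on[OF H0'] H1_pair_continuous_on[OF Hl] \<theta>]
    unfolding N_def by simp
  have Qc: "Q (\<lambda>r. phi r - l r) (\<lambda>r. dphi r - k) \<le> (1 + \<theta>) * Q phi dphi + (1 + 1 / \<theta>) * Q l (\<lambda>r. k)"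
    unfolding Q_def by (rule energy_diff_le_Young[OF H Hl H0' \<theta>])
  have D: "LD * N (\<lambda>r. phi r - l r) \<le> Q (\<lambda>r. phi r - l r) (\<lambda>r. dphi r - k)"
    unfolding LD_def N_def Q_def by (rule lambda_D_mult_mass_le[OF H0])
  have B: "N l \<le> B" "Q l (\<lambda>r. k) \<le> B"
    using affine_interpolant_bounds[OF b_le c_le, where u = "phi a" and v = "phi b"]
    unfolding N_def Q_def B_def l_def k_def by simp_all
  have "0 \<le> LD" unfolding LD_def by (rule lambda_D_nonneg)
  have \<theta>': "0 \<le> 1 + \<theta>" "0 \<le> 1 + 1 / \<theta>" using \<theta> by auto
  have "LD * N phi \<le> (1 + \<theta>) * (LD * N (\<lambda>r. phi r - l r)) + (1 + 1 / \<theta>) * (LD * N l)"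
    using mult_left_mono[OF Nc \<open>0 \<le> LD\<close>] by (simp add: algebra_simps)
  also have "\<dots> \<le> (1 + \<theta>) * Q (\<lambda>r. phi r - l r) (\<lambda>r. dphi r - k) + (1 + 1 / \<theta>) * (LD * B)"
    using \<theta>' \<open>0 \<le> LD\<close> D B by (intro add_mono mult_left_mono) auto
  also have "\<dots> \<le> (1 + \<theta>) * ((1 + \<theta>) * Q phi dphi + (1 + 1 / \<theta>) * B) + (1 + 1 / \<theta>) * (LD * B)"
    using \<theta>' Qc B by (intro add_mono mult_left_mono order.refl order_trans[OF Qc]) auto
  also have "\<dots> = (1 + \<theta>)\<^sup>2 * Q phi dphi + (1 + 1 / \<theta>) * (1 + \<theta> + LD) * B"
    by (simp add: power2_eq_square algebra_simps add_divide_distrib)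
  finally show ?thesis unfolding LD_def B_def N_def Q_def by (simp only: mult.assoc)
qed

end

section \<open>The lower bound up to the boundary values\<close>

lemma outer_inner_estimates_combine:
  fixes L N Q X v \<theta> :: real
  assumes L: "0 \<le> L" and N: "0 \<le> N" "N \<le> 1" and \<theta>: "0 < \<theta>" and X: "0 \<le> X"
    and outer: "L * (1 - N) + Q \<le> v" and inner: "L * N \<le> (1 + \<theta>)\<^sup>2 * Q + X"
  shows "L - 2 * \<theta> * L - X \<le> v"
proof -
  define T where "T = (1 + \<theta>)\<^sup>2"
  have T: "1 \<le> T" unfolding T_def using \<theta> by (simp add: power2_eq_square algebra_simps)
  have "T * (1 - 2 * \<theta>) \<le> 1"
    unfolding T_def using \<theta> by (simp add: power2_eq_square algebra_simps)
  then have "1 - 1 / T \<le> 2 * \<theta>" using T by (simp add: field_simps)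
  moreover have "N * (1 - 1 / T) \<le> 1 - 1 / T"
    using N T by (intro mult_left_le_one_le) (auto simp: field_simps)
  ultimately have "L * (N * (1 - 1 / T)) \<le> L * (2 * \<theta>)"
    using L by (intro mult_left_mono) auto
  then have "L * N * (1 - 1 / T) \<le> 2 * \<theta> * L" by (simp add: algebra_simps)
  moreover have "(L * N - X) / T \<le> Q" using inner T unfolding T_def[symmetric] by (simp add: field_simps)
  moreover have "X / T \<le> X" using X T by (simp add: divide_le_eq mult_le_cancel_left1)
  moreover have "L * (1 - N) + (L * N - X) / T = L - L * N * (1 - 1 / T) - X / T"
    using T by (simp add: field_simps)
  ultimately show ?thesis using outer by linarith
qed

definition weighted_bounded ::
    "nat \<Rightarrow> (real \<Rightarrow> real) \<Rightarrow> real \<Rightarrow> real \<Rightarrow> (real \<Rightarrow> real) \<Rightarrow> (real \<Rightarrow> real) \<Rightarrow> bool" where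
  "weighted_bounded d m s M phi dphi \<longleftrightarrow> H1_pair 0 1 phi dphi
     \<and> set_integrable lborel {0..1} (\<lambda>r. r ^ (d - 1) * exp (2 * s * m r) * (phi r)\<^sup>2)
     \<and> (LBINT r:{0..1}. r ^ (d - 1) * exp (2 * s * m r) * (phi r)\<^sup>2) \<le> 1
     \<and> set_integrable lborel {0..1} (\<lambda>r. r ^ (d - 1) * exp (2 * s * m r) * (dphi r)\<^sup>2)
     \<and> (LBINT r:{0..1}. r ^ (d - 1) * exp (2 * s * m r) * (dphi r)\<^sup>2) \<le> M"

locale weighted_problem =
  fixes a b :: real and c m :: "real \<Rightarrow> real" and d :: nat
  assumes a_pos: "0 < a" and a_less_b: "a < b" and b_less_1: "b < 1"
    and c_pos01: "\<forall>r\<in>{0..1}. 0 < c r" and c_cont01: "continuous_on {0..1} c"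
    and m_cont: "continuous_on {0..1} m" and m_zero: "\<forall>r\<in>{a..b}. m r = 0"
begin

abbreviation weight :: "real \<Rightarrow> real \<Rightarrow> real" where
  "weight s r \<equiv> r ^ (d - 1) * exp (2 * s * m r)"

sublocale dirichlet_problem a b c d
  using a_pos a_less_b b_less_1 c_pos01
  by unfold_locales (auto intro: continuous_on_subset[OF c_cont01])

lemma weighted_integrable:
  assumes H: "H1_pair 0 1 phi dphi"
  shows "set_integrable lborel {0..1} (\<lambda>r. weight s r * (phi r)\<^sup>2)"
    and "set_integrable lborel {0..1} (\<lambda>r. weight s r * (dphi r)\<^sup>2)"
    and "set_integrable lborel {0..1} (\<lambda>r. weight s r * (c r * (phi r)\<^sup>2))"
    and "set_integrable lborel {0..1} (\<lambda>r. weight s r * ((dphi r)\<^sup>2 + c r * (phi r)\<^sup>2))"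
proof -
  have weight_cont: "continuous_on {0..1} (weight s)" by (intro continuous_intros m_cont)
  show phi: "set_integrable lborel {0..1} (\<lambda>r. weight s r * (phi r)\<^sup>2)"
    using H1_pair_continuous_on[OF H]
    by (intro borel_integrable_atLeastAtMost' continuous_intros weight_cont)
  show dphi: "set_integrable lborel {0..1} (\<lambda>r. weight s r * (dphi r)\<^sup>2)"
    using H unfolding H1_pair_def by (intro set_integrable_continuous_mult weight_cont) auto
  show potential: "set_integrable lborel {0..1} (\<lambda>r. weight s r * (c r * (phi r)\<^sup>2))"
    using H1_pair_continuous_on[OF H] c_cont01
    by (intro borel_integrable_atLeastAtMost' continuous_intros m_cont)
  with dphi show "set_integrable lborel {0..1} (\<lambda>r. weight s r * ((dphi r)\<^sup>2 + c r * (phi r)\<^sup>2))"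
    by (simp add: distrib_left)
qed

lemma weighted_energy_split:
  assumes H: "H1_pair 0 1 phi dphi"
  shows "(LBINT r:{0..1}. weight s r * ((dphi r)\<^sup>2 + c r * (phi r)\<^sup>2))
    = (LBINT r:{0..1}. weight s r * (dphi r)\<^sup>2) + (LBINT r:{0..1}. weight s r * (c r * (phi r)\<^sup>2))"
  using weighted_integrable(2,3)[OF H] by (simp add: distrib_left set_integral_add(2))

lemma inner_mass_le_weighted_mass:
  assumes H: "H1_pair 0 1 phi dphi"
  shows "(LBINT r:{a..b}. r ^ (d - 1) * (phi r)\<^sup>2) \<le> (LBINT r:{0..1}. weight s r * (phi r)\<^sup>2)"
proof -
  have "(LBINT r:{a..b}. r ^ (d - 1) * (phi r)\<^sup>2) = (LBINT r:{a..b}. weight s r * (phi r)\<^sup>2)"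
    using m_zero by (intro set_lebesgue_integral_cong) auto
  also have "\<dots> \<le> (LBINT r:{0..1}. weight s r * (phi r)\<^sup>2)"
    using a_pos b_less_1 by (intro set_integral_mono_set weighted_integrable(1)[OF H]) auto
  finally show ?thesis .
qed

text \<open>Where \<open>c > L\<close>, the potential alone pays \<open>L\<close> per unit of mass, and on \<open>[a, b]\<close> the weight is \<open>1\<close>.\<close>

lemma weighted_energy_ge_inner_energy:
  assumes H: "H1_pair 0 1 phi dphi"
    and mass: "(LBINT r:{0..1}. weight s r * (phi r)\<^sup>2) = 1"
    and c_big: "\<forall>r\<in>{0..a} \<union> {b..1}. L < c r"
  shows "L * (1 - (LBINT r:{a..b}. r ^ (d - 1) * (phi r)\<^sup>2))
      + (LBINT r:{a..b}. r ^ (d - 1) * ((dphi r)\<^sup>2 + c r * (phi r)\<^sup>2))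
    \<le> (LBINT r:{0..1}. weight s r * ((dphi r)\<^sup>2 + c r * (phi r)\<^sup>2))"
proof -
  define N where "N = (LBINT r:{a..b}. r ^ (d - 1) * (phi r)\<^sup>2)"
  define Q where "Q = (LBINT r:{a..b}. r ^ (d - 1) * ((dphi r)\<^sup>2 + c r * (phi r)\<^sup>2))"
  define E where
    "E r = r ^ (d - 1) * ((dphi r)\<^sup>2 + c r * (phi r)\<^sup>2) - L * (r ^ (d - 1) * (phi r)\<^sup>2)" for r
  have Hab: "H1_pair a b phi dphi" using H1_pair_restrict[OF H] a_pos a_less_b b_less_1 by simp
  have sub: "{a..b} \<subseteq> {0..1}" using a_pos b_less_1 by auto
  have E: "set_integrable lborel {a..b} E" "(LBINT r:{a..b}. E r) = Q - L * N"
    unfolding E_def Q_def N_def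
    using energy_integrable[OF Hab] mass_integrable[OF H1_pair_continuous_on[OF Hab]] by auto
  have "L + (Q - L * N)
      = (LBINT r:{0..1}. L * (weight s r * (phi r)\<^sup>2) + indicator {a..b} r * E r)"
    using weighted_integrable(1)[OF H] set_integrable_zero_extension[OF E(1) sub] mass E(2)
    by (simp add: set_integral_zero_extension[OF E(1) sub])
  also have "\<dots> \<le> (LBINT r:{0..1}. weight s r * ((dphi r)\<^sup>2 + c r * (phi r)\<^sup>2))"
  proof (intro set_integral_mono weighted_integrable[OF H] set_integral_add(1)
      set_integrable_mult_right set_integrable_zero_extension[OF E(1) sub])
    fix r :: real assume r: "r \<in> {0..1}"
    show "L * (weight s r * (phi r)\<^sup>2) + indicator {a..b} r * E r
        \<le> weight s r * ((dphi r)\<^sup>2 + c r * (phi r)\<^sup>2)"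
    proof (cases "r \<in> {a..b}")
      case True
      then show ?thesis using m_zero unfolding E_def by (simp add: algebra_simps)
    next
      case False
      then have "L * (phi r)\<^sup>2 \<le> (dphi r)\<^sup>2 + c r * (phi r)\<^sup>2"
        using c_big r by (smt (verit, best) Un_iff atLeastAtMost_iff mult_right_mono zero_le_power2)
      from mult_left_mono[OF this, of "weight s r"] False r show ?thesis by (simp add: algebra_simps)
    qed
  qed
  finally show ?thesis unfolding N_def Q_def by (simp add: algebra_simps)
qed

lemma weighted_energy_ge_lambda_D_minus_boundary:
  assumes c_big: "\<forall>r\<in>{0..a} \<union> {b..1}. lambda_D d c a b < c r" and c_le: "\<forall>r\<in>{a..b}. c r \<le> Cm"
    and H: "H1_pair 0 1 phi dphi" and mass: "(LBINT r:{0..1}. weight s r * (phi r)\<^sup>2) = 1"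
    and \<theta>: "0 < \<theta>"
  shows "lambda_D d c a b - 2 * \<theta> * lambda_D d c a b
      - (1 + 1 / \<theta>) * (1 + \<theta> + lambda_D d c a b) * (2 / (b - a)\<^sup>2 + 2 * Cm + 2)
        * ((phi a)\<^sup>2 + (phi b)\<^sup>2)
    \<le> (LBINT r:{0..1}. weight s r * ((dphi r)\<^sup>2 + c r * (phi r)\<^sup>2))"
proof (rule outer_inner_estimates_combine[OF lambda_D_nonneg _ _ \<theta> _
      weighted_energy_ge_inner_energy[OF H mass c_big]])
  have Hab: "H1_pair a b phi dphi" using H1_pair_restrict[OF H] a_pos a_less_b b_less_1 by simp
  show "0 \<le> (LBINT r:{a..b}. r ^ (d - 1) * (phi r)\<^sup>2)"
    using a_pos by (intro set_integral_nonneg) auto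
  show "(LBINT r:{a..b}. r ^ (d - 1) * (phi r)\<^sup>2) \<le> 1"
    using inner_mass_le_weighted_mass[OF H, of s] mass by simp
  have "0 \<le> Cm" using c_le by (rule c_upper_bound_nonneg)
  then show "0 \<le> (1 + 1 / \<theta>) * (1 + \<theta> + lambda_D d c a b) * (2 / (b - a)\<^sup>2 + 2 * Cm + 2)
        * ((phi a)\<^sup>2 + (phi b)\<^sup>2)"
    using \<theta> lambda_D_nonneg by (intro mult_nonneg_nonneg add_nonneg_nonneg) auto
  show "lambda_D d c a b * (LBINT r:{a..b}. r ^ (d - 1) * (phi r)\<^sup>2)
    \<le> (1 + \<theta>)\<^sup>2 * (LBINT r:{a..b}. r ^ (d - 1) * ((dphi r)\<^sup>2 + c r * (phi r)\<^sup>2))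
      + (1 + 1 / \<theta>) * (1 + \<theta> + lambda_D d c a b) * (2 / (b - a)\<^sup>2 + 2 * Cm + 2)
        * ((phi a)\<^sup>2 + (phi b)\<^sup>2)"
    using lambda_D_mult_mass_le_energy_plus_boundary[OF less_imp_le[OF b_less_1] c_le Hab \<theta>] .
qed

lemma weighted_derivative_le_energy:
  assumes H: "H1_pair 0 1 phi dphi"
  shows "(LBINT r:{0..1}. weight s r * (dphi r)\<^sup>2)
    \<le> (LBINT r:{0..1}. weight s r * ((dphi r)\<^sup>2 + c r * (phi r)\<^sup>2))"
proof -
  have "0 \<le> (LBINT r:{0..1}. weight s r * (c r * (phi r)\<^sup>2))"
    using c_pos01 by (intro set_integral_nonneg) (simp add: less_imp_le)
  then show ?thesis unfolding weighted_energy_split[OF H] by simp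
qed

lemma lambda_s_ge_of_boundary_bound:
  assumes c_big: "\<forall>r\<in>{0..a} \<union> {b..1}. lambda_D d c a b < c r" and c_le: "\<forall>r\<in>{a..b}. c r \<le> Cm"
    and \<theta>: "0 < \<theta>" and \<eta>: "0 \<le> \<eta>"
    and small: "\<forall>phi dphi. weighted_bounded d m s (lambda_D d c a b + 1) phi dphi
      \<longrightarrow> (phi a)\<^sup>2 + (phi b)\<^sup>2 \<le> \<eta>"
  shows "lambda_D d c a b - 2 * \<theta> * lambda_D d c a b
      - (1 + 1 / \<theta>) * (1 + \<theta> + lambda_D d c a b) * (2 / (b - a)\<^sup>2 + 2 * Cm + 2) * \<eta>
    \<le> lambda_s d m c s"
proof -
  define LD where "LD = lambda_D d c a b"
  define R where "R = (1 + 1 / \<theta>) * (1 + \<theta> + LD) * (2 / (b - a)\<^sup>2 + 2 * Cm + 2)"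
  have "0 \<le> LD" unfolding LD_def by (rule lambda_D_nonneg)
  moreover have "0 \<le> Cm" using c_le by (rule c_upper_bound_nonneg)
  ultimately have "0 \<le> R" unfolding R_def using \<theta> by simp
  have "weighted_energies d m c s \<noteq> {}"
    using dirichlet_energies_subset_weighted_energies[of a b m d c s] dirichlet_energies_nonempty
      a_pos a_less_b b_less_1 m_zero by auto
  then show ?thesis
    unfolding lambda_s_eq_Inf LD_def[symmetric] R_def[symmetric]
  proof (rule cInf_greatest)
    fix v assume "v \<in> weighted_energies d m c s"
    then obtain phi dphi where H: "H1_pair 0 1 phi dphi"
      and mass: "(LBINT r:{0..1}. weight s r * (phi r)\<^sup>2) = 1"
      and v: "v = (LBINT r:{0..1}. weight s r * ((dphi r)\<^sup>2 + c r * (phi r)\<^sup>2))"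
      unfolding weighted_energies_def by blast
    show "LD - 2 * \<theta> * LD - R * \<eta> \<le> v"
    proof (cases "LD + 1 \<le> v")
      case False
      then have "(phi a)\<^sup>2 + (phi b)\<^sup>2 \<le> \<eta>"
        using small weighted_integrable[OF H, of s] H mass weighted_derivative_le_energy[OF H, of s] v
        unfolding weighted_bounded_def LD_def by force
      then show ?thesis
        using weighted_energy_ge_lambda_D_minus_boundary[OF c_big c_le H mass \<theta>] v \<open>0 \<le> R\<close>
        unfolding LD_def[symmetric] R_def[symmetric] by (smt (verit) mult_left_mono)
    next
      case True
      moreover have "0 \<le> 2 * \<theta> * LD" "0 \<le> R * \<eta>" using \<theta> \<eta> \<open>0 \<le> LD\<close> \<open>0 \<le> R\<close> by simp_all
      ultimately show ?thesis by linarith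
    qed
  qed
qed

lemma eventually_lambda_s_ge:
  assumes c_big: "\<forall>r\<in>{0..a} \<union> {b..1}. lambda_D d c a b < c r"
    and boundary_small: "\<And>M \<eta>. 0 \<le> M \<Longrightarrow> 0 < \<eta> \<Longrightarrow>
      eventually (\<lambda>s. \<forall>phi dphi. weighted_bounded d m s M phi dphi \<longrightarrow> (phi a)\<^sup>2 + (phi b)\<^sup>2 \<le> \<eta>) at_top"
    and \<epsilon>: "0 < \<epsilon>"
  shows "eventually (\<lambda>s. lambda_D d c a b - \<epsilon> \<le> lambda_s d m c s) at_top"
proof -
  define LD where "LD = lambda_D d c a b"
  have "0 \<le> LD" unfolding LD_def by (rule lambda_D_nonneg)
  obtain r0 where "r0 \<in> {a..b}" "\<forall>r\<in>{a..b}. c r \<le> c r0"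
    using continuous_attains_sup[OF compact_Icc _ c_cont] a_less_b by auto
  define \<theta> where "\<theta> = \<epsilon> / (4 * (LD + 1))"
  have \<theta>: "0 < \<theta>" "2 * \<theta> * LD \<le> \<epsilon> / 2"
    unfolding \<theta>_def using \<epsilon> \<open>0 \<le> LD\<close> by (auto simp: field_simps)
  define R where "R = (1 + 1 / \<theta>) * (1 + \<theta> + LD) * (2 / (b - a)\<^sup>2 + 2 * c r0 + 2)"
  have "0 < R"
    unfolding R_def using \<theta> \<open>0 \<le> LD\<close> c_nonneg[OF \<open>r0 \<in> {a..b}\<close>] a_less_b
    by (intro mult_pos_pos add_pos_nonneg) auto
  have "eventually (\<lambda>s. \<forall>phi dphi. weighted_bounded d m s (LD + 1) phi dphi
      \<longrightarrow> (phi a)\<^sup>2 + (phi b)\<^sup>2 \<le> \<epsilon> / (2 * R)) at_top"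
    using \<open>0 \<le> LD\<close> \<open>0 < R\<close> \<epsilon> by (intro boundary_small) auto
  then show ?thesis
  proof (rule eventually_mono)
    fix s assume "\<forall>phi dphi. weighted_bounded d m s (LD + 1) phi dphi
      \<longrightarrow> (phi a)\<^sup>2 + (phi b)\<^sup>2 \<le> \<epsilon> / (2 * R)"
    from lambda_s_ge_of_boundary_bound[OF c_big _ \<theta>(1) _ this[unfolded LD_def]]
    have "LD - 2 * \<theta> * LD - R * (\<epsilon> / (2 * R)) \<le> lambda_s d m c s"
      using \<open>\<forall>r\<in>{a..b}. c r \<le> c r0\<close> \<open>0 < R\<close> \<epsilon> unfolding LD_def R_def by simp
    then show "lambda_D d c a b - \<epsilon> \<le> lambda_s d m c s"
      using \<theta>(2) \<open>0 < R\<close> unfolding LD_def by simp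
  qed
qed

end

section \<open>Pointwise bounds from weighted norms\<close>

lemma exists_sq_value_le:
  fixes phi rho :: "real \<Rightarrow> real"
  assumes pq: "0 \<le> p1" "p1 < p2" "p2 \<le> 1" and W: "0 < W" "\<forall>r\<in>{p1..p2}. W \<le> rho r"
    and rho: "\<forall>r\<in>{0..1}. 0 \<le> rho r"
    and int: "set_integrable lborel {0..1} (\<lambda>r. rho r * (phi r)\<^sup>2)"
    and mass: "(LBINT r:{0..1}. rho r * (phi r)\<^sup>2) \<le> 1"
  shows "\<exists>r\<in>{p1..p2}. (phi r)\<^sup>2 \<le> 2 / (W * (p2 - p1))"
proof (rule ccontr)
  define T where "T = 2 / (W * (p2 - p1))"
  assume "\<not> ?thesis"
  then have big: "T < (phi r)\<^sup>2" if "r \<in> {p1..p2}" for r using that unfolding T_def by force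
  have sub: "{p1..p2} \<subseteq> {0..1}" using pq by auto
  have "(LBINT r:{p1..p2}. W * T) = 2"
    unfolding T_def using pq W by (simp add: set_integral_const_interval field_simps)
  then have "2 = (LBINT r:{p1..p2}. W * T)" ..
  also have "\<dots> \<le> (LBINT r:{p1..p2}. rho r * (phi r)\<^sup>2)"
  proof (intro set_integral_mono set_integrable_const_interval set_integrable_subset[OF int _ sub])
    fix r assume r: "r \<in> {p1..p2}"
    then have "W \<le> rho r" using W by blast
    then show "W * T \<le> rho r * (phi r)\<^sup>2"
      using big[OF r] W pq by (intro mult_mono) (auto simp: T_def)
  qed simp
  also have "\<dots> \<le> (LBINT r:{0..1}. rho r * (phi r)\<^sup>2)"
    using rho by (intro set_integral_mono_set[OF int sub]) auto
  finally show False using mass by simp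
qed

lemma sq_increment_le_weighted:
  fixes phi dphi rho :: "real \<Rightarrow> real"
  assumes H: "H1_pair 0 1 phi dphi" and pq: "0 \<le> p" "p \<le> u" "u \<le> v" "v \<le> q" "q \<le> 1"
    and W: "0 < W" "\<forall>r\<in>{p..q}. W \<le> rho r" and rho: "\<forall>r\<in>{0..1}. 0 \<le> rho r"
    and int: "set_integrable lborel {0..1} (\<lambda>r. rho r * (dphi r)\<^sup>2)"
    and energy: "(LBINT r:{0..1}. rho r * (dphi r)\<^sup>2) \<le> M"
  shows "(phi v - phi u)\<^sup>2 \<le> (q - p) * (M / W)"
proof -
  have sub: "{p..q} \<subseteq> {0..1}" using pq by auto
  have int_pq: "set_integrable lborel {p..q} (\<lambda>t. (dphi t)\<^sup>2)"
    using H1_pair_set_integrable(2)[OF H, of p q] pq by simp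
  have "(phi v - phi u)\<^sup>2 \<le> (v - u) * (LBINT t:{u..v}. (dphi t)\<^sup>2)"
    using H1_pair_sq_increment_le[OF H, of u v] pq by simp
  also have "\<dots> \<le> (q - p) * (LBINT t:{p..q}. (dphi t)\<^sup>2)"
    using pq by (intro mult_mono set_integral_mono_set[OF int_pq] set_integral_nonneg) auto
  also have "(LBINT t:{p..q}. (dphi t)\<^sup>2) \<le> (LBINT t:{p..q}. rho t * (dphi t)\<^sup>2 / W)"
  proof (intro set_integral_mono[OF int_pq] set_integrable_divide set_integrable_subset[OF int _ sub])
    fix t assume "t \<in> {p..q}"
    then have "W * (dphi t)\<^sup>2 \<le> rho t * (dphi t)\<^sup>2" using W by (intro mult_right_mono) auto
    then show "(dphi t)\<^sup>2 \<le> rho t * (dphi t)\<^sup>2 / W" using W by (simp add: field_simps)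
  qed simp
  also have "\<dots> \<le> M / W"
    using set_integral_mono_set[OF int sub] rho W energy by (auto intro!: divide_right_mono)
  finally show ?thesis using pq by (simp add: mult_left_mono)
qed

lemma sq_value_le_of_weighted_norms:
  fixes phi dphi rho :: "real \<Rightarrow> real"
  assumes H: "H1_pair 0 1 phi dphi"
    and pq: "0 \<le> p" "p \<le> p1" "p1 < p2" "p2 \<le> q" "q \<le> 1" and e: "e \<in> {p..q}"
    and W1: "0 < W1" "\<forall>r\<in>{p..q}. W1 \<le> rho r"
    and W2: "0 < W2" "\<forall>r\<in>{p1..p2}. W2 \<le> rho r"
    and rho: "\<forall>r\<in>{0..1}. 0 \<le> rho r"
    and int_phi: "set_integrable lborel {0..1} (\<lambda>r. rho r * (phi r)\<^sup>2)"
    and mass: "(LBINT r:{0..1}. rho r * (phi r)\<^sup>2) \<le> 1"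
    and int_dphi: "set_integrable lborel {0..1} (\<lambda>r. rho r * (dphi r)\<^sup>2)"
    and energy: "(LBINT r:{0..1}. rho r * (dphi r)\<^sup>2) \<le> M"
  shows "(phi e)\<^sup>2 \<le> 4 / (W2 * (p2 - p1)) + 2 * (q - p) * M / W1"
proof -
  obtain r where r: "r \<in> {p1..p2}" "(phi r)\<^sup>2 \<le> 2 / (W2 * (p2 - p1))"
    using exists_sq_value_le[OF _ _ _ W2 rho int_phi mass] pq by auto
  have "(phi e - phi r)\<^sup>2 \<le> (q - p) * (M / W1)"
  proof (cases "r \<le> e")
    case True
    then show ?thesis
      using sq_increment_le_weighted[OF H _ _ _ _ _ W1 rho int_dphi energy, of r e] pq e r by simp
  next
    case False
    then show ?thesis
      using sq_increment_le_weighted[OF H _ _ _ _ _ W1 rho int_dphi energy, of e r] pq e r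
      by (simp add: power2_commute)
  qed
  moreover have "(phi e)\<^sup>2 \<le> 2 * (phi r)\<^sup>2 + 2 * (phi e - phi r)\<^sup>2"
    using sq_add_le_Young[of 1 "phi r" "phi e - phi r"] by simp
  moreover have "2 * (2 / (W2 * (p2 - p1))) = 4 / (W2 * (p2 - p1))"
    "2 * ((q - p) * (M / W1)) = 2 * (q - p) * M / W1" by simp_all
  ultimately show ?thesis using r by linarith
qed

section \<open>The step profile of \<open>S_D\<close>\<close>

locale step_partition =
  fixes \<delta> \<alpha> \<beta> :: real and l :: nat and a :: real
  assumes \<alpha>_pos: "0 < \<alpha>" and \<alpha>_less_\<beta>: "\<alpha> < \<beta>" and \<beta>_less_1: "\<beta> < 1"
    and sums: "(\<lambda>i. \<alpha> ^ (Suc i + l) + \<beta> ^ (Suc i + l)) sums (a - \<delta>)"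
begin

abbreviation "x \<equiv> x_pt \<delta> \<alpha> \<beta> l"
abbreviation "y \<equiv> y_pt \<delta> \<alpha> \<beta> l"

lemma x_lt_y: "x n < y n"
  using \<alpha>_pos by (simp add: y_pt_def)

lemma x_Suc_eq: "x (Suc n) = y n + \<beta> ^ (Suc n + l)"
  by (simp add: x_pt_def y_pt_def)

lemma y_lt_x_Suc: "y n < x (Suc n)"
  using \<alpha>_pos \<alpha>_less_\<beta> by (simp add: x_Suc_eq)

lemma x_mono: "n \<le> k \<Longrightarrow> x n \<le> x k"
  by (induction k rule: dec_induct)
    (auto intro: order_trans less_imp_le less_trans[OF x_lt_y y_lt_x_Suc])

lemma y_mono: "n \<le> k \<Longrightarrow> y n \<le> y k"
  by (induction k rule: dec_induct)
    (auto intro: order_trans less_imp_le less_trans[OF y_lt_x_Suc x_lt_y])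

lemma delta_le_y: "\<delta> \<le> y n"
  using x_mono[of 0 n] x_lt_y[of n] by (simp add: x_pt_def)

lemma sums_tail: "(\<lambda>i. \<alpha> ^ (Suc (i + n) + l) + \<beta> ^ (Suc (i + n) + l)) sums (a - x n)"
proof -
  have "(\<Sum>i<n. \<alpha> ^ (Suc i + l) + \<beta> ^ (Suc i + l)) = x n - \<delta>"
    unfolding x_pt_def by (simp add: sum.atLeast1_atMost_eq)
  then show ?thesis using sums_split_initial_segment[OF sums, of n] by simp
qed

lemma x_less_a: "x n < a"
proof -
  have "0 < (\<Sum>i. \<alpha> ^ (Suc (i + n) + l) + \<beta> ^ (Suc (i + n) + l))"
    using \<alpha>_pos \<alpha>_less_\<beta> sums_tail[of n]
    by (intro suminf_pos) (auto simp: sums_iff intro!: add_pos_pos)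
  then show ?thesis using sums_tail[of n] by (simp add: sums_iff)
qed

text \<open>The tail of the series is dominated by twice the geometric series of \<open>\<beta>\<close>.\<close>

lemma a_minus_y_le: "a - y n \<le> 2 * \<beta> ^ (Suc n + l) / (1 - \<beta>)"
proof -
  have geom: "(\<lambda>i. 2 * \<beta> ^ (Suc n + l) * \<beta> ^ i) sums (2 * \<beta> ^ (Suc n + l) * (1 / (1 - \<beta>)))"
    using \<beta>_less_1 \<alpha>_pos \<alpha>_less_\<beta> by (intro sums_mult geometric_sums) auto
  have "\<alpha> ^ (Suc (i + n) + l) + \<beta> ^ (Suc (i + n) + l) \<le> 2 * \<beta> ^ (Suc n + l) * \<beta> ^ i" for i
  proof -
    have "\<alpha> ^ (Suc (i + n) + l) \<le> \<beta> ^ (Suc (i + n) + l)"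
      using \<alpha>_pos \<alpha>_less_\<beta> by (intro power_mono) auto
    then show ?thesis by (simp add: power_add[symmetric] algebra_simps)
  qed
  then have "a - x n \<le> 2 * \<beta> ^ (Suc n + l) * (1 / (1 - \<beta>))"
    by (rule sums_le[OF _ sums_tail geom])
  then show ?thesis using x_lt_y[of n] by simp
qed

lemma tilde_m_left_eq:
  assumes "y k \<le> r" "r < x (Suc k)"
  shows "tilde_m_left \<delta> h \<alpha> \<beta> \<nu> l r = \<nu> * h ^ k"
proof -
  have not_neg: "\<not> (x n \<le> r \<and> r < y n)" for n
    using y_mono[of n k] x_mono[of "Suc k" n] assms by (cases "n \<le> k") auto
  have pos: "y n \<le> r \<and> r < x (Suc n) \<longleftrightarrow> n = k" for n
  proof -
    have "\<not> (y n \<le> r \<and> r < x (Suc n))" if "n < k"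
      using x_mono[of "Suc n" k] x_lt_y[of k] assms that by simp
    moreover have "\<not> (y n \<le> r \<and> r < x (Suc n))" if "k < n"
      using y_mono[of "Suc k" n] x_lt_y[of "Suc k"] assms that by simp
    ultimately show ?thesis using assms by (cases n k rule: linorder_cases) auto
  qed
  then have "(SOME n. y n \<le> r \<and> r < x (Suc n)) = k" by simp
  then show ?thesis unfolding tilde_m_left_def using not_neg pos by auto
qed

lemma tilde_m_left_ge:
  assumes "y k \<le> r" "0 < h" "h < 1" "0 \<le> \<nu>"
  shows "- (h ^ Suc k) \<le> tilde_m_left \<delta> h \<alpha> \<beta> \<nu> l r"
proof (cases "\<exists>n. x n \<le> r \<and> r < y n")
  case True
  define n where "n = (SOME n. x n \<le> r \<and> r < y n)"
  have "x n \<le> r \<and> r < y n" unfolding n_def using True by (rule someI_ex)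
  then have "Suc k \<le> n" using y_mono[of n k] assms(1) by (cases "Suc k \<le> n") auto
  then have "h ^ n \<le> h ^ Suc k" using assms by (intro power_decreasing) auto
  then show ?thesis unfolding tilde_m_left_def using True n_def by simp
next
  case False
  then show ?thesis unfolding tilde_m_left_def using assms
    by (auto intro: order_trans[of _ 0])
qed

end

lemma exists_crossing_index:
  fixes h \<mu> s :: real and K :: nat
  assumes h: "0 < h" "h < 1" and \<mu>: "0 < \<mu>" and K: "\<mu> * K < 2 * s * h ^ K"
  shows "\<exists>j\<ge>K. \<mu> * j < 2 * s * h ^ j \<and> 2 * s * h ^ Suc j \<le> \<mu> * Suc j"
proof -
  define P where "P i \<longleftrightarrow> 2 * s * h ^ (K + i) \<le> \<mu> * (K + i)" for i
  have "0 < 2 * s * h ^ K" using K \<mu> by (smt (verit) of_nat_0_le_iff mult_nonneg_nonneg)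
  then have "0 < s" using h by (simp add: zero_less_mult_iff)
  obtain n :: nat where n: "2 * s / \<mu> \<le> n" using real_arch_simple by blast
  have "2 * s * h ^ (K + n) \<le> 2 * s" using \<open>0 < s\<close> h by (simp add: power_le_one)
  also have "\<dots> \<le> \<mu> * n" using n \<mu> by (simp add: field_simps)
  also have "\<dots> \<le> \<mu> * (K + n)" using \<mu> by simp
  finally have "P n" unfolding P_def by simp
  moreover have "\<not> P 0" using K unfolding P_def by simp
  ultimately obtain i where "\<not> P i" "P (Suc i)" using ex_least_nat_less[of P n] by blast
  then show ?thesis unfolding P_def by (intro exI[of _ "K + i"]) (auto simp: algebra_simps)
qed

lemma exponents_at_crossing_index:
  fixes h \<nu> \<mu> q \<gamma> s :: real and j :: nat
  assumes "0 < h" "0 \<le> \<nu>" "0 \<le> q" "0 \<le> \<gamma>" "\<nu> * (h * \<mu>) - q = \<gamma>" "q - h * \<mu> = \<gamma>"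
    and crossing: "\<mu> * j < 2 * s * h ^ j" "2 * s * h ^ Suc j \<le> \<mu> * Suc j"
  shows "- 2 * s * \<nu> * h ^ Suc j + q * Suc j \<le> q - \<gamma> * j"
    and "- q * Suc j + 2 * s * h ^ Suc (Suc j) \<le> q - \<gamma> * j"
proof -
  have "\<nu> * (h * (\<mu> * j)) \<le> \<nu> * (h * (2 * s * h ^ j))"
    using crossing(1) assms(1,2) by (intro mult_left_mono) auto
  moreover have "\<nu> * (h * (\<mu> * j)) = \<gamma> * j + q * j"
    using arg_cong[OF assms(5), of "\<lambda>t. (t + q) * j"] by (simp add: algebra_simps)
  moreover have "- 2 * s * \<nu> * h ^ Suc j = - (\<nu> * (h * (2 * s * h ^ j)))"
    "q * Suc j = q * j + q" by (simp_all add: algebra_simps)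
  ultimately show "- 2 * s * \<nu> * h ^ Suc j + q * Suc j \<le> q - \<gamma> * j" by linarith
  have "h * (2 * s * h ^ Suc j) \<le> h * (\<mu> * Suc j)" using crossing(2) assms(1) by simp
  then show "- q * Suc j + 2 * s * h ^ Suc (Suc j) \<le> q - \<gamma> * j"
    using assms(3,4,6) by (simp add: algebra_simps)
qed

text \<open>With \<open>q = - ln \<beta>\<close>, a step \<open>k\<close> with \<open>2 s h\<^sup>k \<approx> \<mu> k\<close> and \<open>h \<mu> = 2 q / (1 + \<nu>)\<close> makes both
  exponents at most \<open>q - \<gamma> k\<close>, where \<open>\<gamma> = q (\<nu> - 1) / (1 + \<nu>)\<close>.\<close>

lemma eventually_exists_index_small:
  fixes h \<beta> \<nu> \<epsilon> :: real
  assumes h: "0 < h" "h < 1" and \<beta>: "0 < \<beta>" "\<beta> < 1" and \<nu>: "1 < \<nu>" and \<epsilon>: "0 < \<epsilon>"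
  shows "eventually (\<lambda>s. \<exists>k. exp (- 2 * s * \<nu> * h ^ k) / \<beta> ^ k \<le> \<epsilon>
                          \<and> \<beta> ^ k * exp (2 * s * h ^ Suc k) \<le> \<epsilon>) at_top"
proof -
  define q where "q = - ln \<beta>"
  have "0 < q" unfolding q_def using \<beta> by simp
  have \<beta>_pow: "\<beta> ^ k = exp (- q * k)" for k :: nat
    unfolding q_def using \<beta> exp_of_nat_mult[of k "ln \<beta>"] by (simp add: mult.commute)
  define \<mu> where "\<mu> = 2 * q / ((1 + \<nu>) * h)"
  define \<gamma> where "\<gamma> = q * (\<nu> - 1) / (1 + \<nu>)"
  have "0 < \<mu>" "0 < \<gamma>" unfolding \<mu>_def \<gamma>_def using \<open>0 < q\<close> h \<nu> by auto
  have h\<mu>: "h * \<mu> = 2 * q / (1 + \<nu>)" unfolding \<mu>_def using h \<nu> by simp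
  have \<gamma>1: "\<nu> * (h * \<mu>) - q = \<gamma>" and \<gamma>2: "q - h * \<mu> = \<gamma>"
    unfolding h\<mu> \<gamma>_def using \<nu> by (simp_all add: field_simps)
  obtain K :: nat where K: "(q - ln \<epsilon>) / \<gamma> \<le> K" using real_arch_simple by blast
  have small: "exp (q - \<gamma> * j) \<le> \<epsilon>" if "K \<le> j" for j :: nat
  proof -
    have "q - ln \<epsilon> \<le> \<gamma> * j" using K that \<open>0 < \<gamma>\<close> by (simp add: field_simps order_trans)
    then have "exp (q - \<gamma> * j) \<le> exp (ln \<epsilon>)" by simp
    then show ?thesis using \<epsilon> by simp
  qed
  have "eventually (\<lambda>s. \<mu> * K / (2 * h ^ K) < s) at_top" by (rule eventually_gt_at_top)
  then show ?thesis
  proof (rule eventually_mono)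
    fix s assume "\<mu> * K / (2 * h ^ K) < s"
    then have "\<mu> * K < 2 * s * h ^ K" using h by (simp add: field_simps)
    then obtain j where j: "K \<le> j" "\<mu> * j < 2 * s * h ^ j" "2 * s * h ^ Suc j \<le> \<mu> * Suc j"
      using exists_crossing_index[OF h \<open>0 < \<mu>\<close>] by blast
    note exponents = exponents_at_crossing_index[OF h(1) _ _ _ \<gamma>1 \<gamma>2 j(2,3)]
    have "- 2 * s * \<nu> * h ^ Suc j + q * Suc j \<le> q - \<gamma> * j"
      using exponents(1) \<nu> \<open>0 < q\<close> \<open>0 < \<gamma>\<close> by simp
    moreover have
      "exp (- 2 * s * \<nu> * h ^ Suc j) / \<beta> ^ Suc j = exp (- 2 * s * \<nu> * h ^ Suc j + q * Suc j)"
      unfolding \<beta>_pow exp_diff[symmetric] by simp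
    ultimately have E1: "exp (- 2 * s * \<nu> * h ^ Suc j) / \<beta> ^ Suc j \<le> \<epsilon>"
      using small[OF j(1)] by (metis exp_le_cancel_iff order_trans)
    have "- q * Suc j + 2 * s * h ^ Suc (Suc j) \<le> q - \<gamma> * j"
      using exponents(2) \<nu> \<open>0 < q\<close> \<open>0 < \<gamma>\<close> by simp
    moreover have
      "\<beta> ^ Suc j * exp (2 * s * h ^ Suc (Suc j)) = exp (- q * Suc j + 2 * s * h ^ Suc (Suc j))"
      unfolding \<beta>_pow exp_add by simp
    ultimately have "\<beta> ^ Suc j * exp (2 * s * h ^ Suc (Suc j)) \<le> \<epsilon>"
      using small[OF j(1)] by (metis exp_le_cancel_iff order_trans)
    with E1 show "\<exists>k. exp (- 2 * s * \<nu> * h ^ k) / \<beta> ^ k \<le> \<epsilon> \<and> \<beta> ^ k * exp (2 * s * h ^ Suc k) \<le> \<epsilon>"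
      by blast
  qed
qed

lemma weight_ge:
  fixes m :: "real \<Rightarrow> real"
  assumes "0 \<le> s" "0 < \<delta>" "\<delta> \<le> r" "L \<le> m r"
  shows "\<delta> ^ (d - 1) * exp (2 * s * L) \<le> r ^ (d - 1) * exp (2 * s * m r)"
  using assms by (intro mult_mono power_mono) (auto intro: mult_left_mono)

locale step_profile = step_partition \<delta> \<alpha> \<beta> l a
  for \<delta> \<alpha> \<beta> :: real and l :: nat and a :: real +
  fixes b h \<nu> :: real and m :: "real \<Rightarrow> real"
  assumes \<delta>_pos: "0 < \<delta>" and h_pos: "0 < h" and h_less_\<alpha>: "h < \<alpha>" and \<nu>_gt_1: "1 < \<nu>"
    and a_plus_b: "a + b = 1" and a_less_b: "a < b"
    and m_sym: "\<forall>r\<in>{0..1}. m r = m (1 - r)" and m_zero: "\<forall>r\<in>{a..b}. m r = 0"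
    and m_ge_tilde_m: "\<forall>r\<in>{\<delta>..<a}. tilde_m \<delta> h \<alpha> \<beta> \<nu> l r \<le> m r"
begin

lemma h_less_1: "h < 1"
  using h_less_\<alpha> \<alpha>_less_\<beta> \<beta>_less_1 by simp

lemma tilde_m_eq_left: "r < a \<Longrightarrow> tilde_m \<delta> h \<alpha> \<beta> \<nu> l r = tilde_m_left \<delta> h \<alpha> \<beta> \<nu> l r"
  unfolding tilde_m_def using a_plus_b a_less_b by simp

lemma m_ge_tail:
  assumes "y k \<le> r" "r \<le> a"
  shows "- (h ^ Suc k) \<le> m r"
proof (cases "r = a")
  case True
  then show ?thesis using m_zero a_less_b h_pos by simp
next
  case False
  then have "r \<in> {\<delta>..<a}" using assms delta_le_y[of k] by auto
  then show ?thesis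
    using m_ge_tilde_m tilde_m_eq_left tilde_m_left_ge[OF assms(1) h_pos h_less_1] \<nu>_gt_1
    by (smt (verit, best) atLeastLessThan_iff)
qed

lemma m_ge_step:
  assumes "y k \<le> r" "r < x (Suc k)"
  shows "\<nu> * h ^ k \<le> m r"
proof -
  have "r \<in> {\<delta>..<a}" using assms delta_le_y[of k] x_less_a[of "Suc k"] by auto
  then show ?thesis
    using m_ge_tilde_m tilde_m_eq_left tilde_m_left_eq[OF assms] by fastforce
qed

lemma m_ge_tail_reflected:
  assumes "b \<le> r" "r \<le> 1 - y k"
  shows "- (h ^ Suc k) \<le> m r"
proof -
  have "r \<in> {0..1}" using assms a_plus_b a_less_b delta_le_y[of k] \<delta>_pos by auto
  then have "m r = m (1 - r)" using m_sym by blast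
  then show ?thesis using m_ge_tail[of k "1 - r"] assms a_plus_b by simp
qed

lemma m_ge_step_reflected:
  assumes "1 - x (Suc k) < r" "r \<le> 1 - y k"
  shows "\<nu> * h ^ k \<le> m r"
proof -
  have "r \<in> {0..1}" using assms x_less_a[of "Suc k"] a_plus_b a_less_b delta_le_y[of k] \<delta>_pos by auto
  then have "m r = m (1 - r)" using m_sym by blast
  then show ?thesis using m_ge_step[of k "1 - r"] assms by simp
qed

lemma boundary_intervals:
  assumes "e = a \<or> e = b"
  obtains p p1 where "\<delta> \<le> p" "p \<le> p1" "p1 + \<beta> ^ (Suc k + l) / 2 \<le> p + (a - y k)"
    "p + (a - y k) \<le> 1" "e \<in> {p..p + (a - y k)}"
    "\<forall>r\<in>{p..p + (a - y k)}. - (h ^ Suc k) \<le> m r"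
    "\<forall>r\<in>{p1..p1 + \<beta> ^ (Suc k + l) / 2}. \<nu> * h ^ k \<le> m r"
proof -
  define L where "L = \<beta> ^ (Suc k + l)"
  have L: "0 < L" "y k + L < a"
    unfolding L_def using \<alpha>_pos \<alpha>_less_\<beta> x_Suc_eq[of k] x_less_a[of "Suc k"] by auto
  have "y k < a" "\<delta> \<le> y k" using L delta_le_y[of k] by auto
  show thesis using assms
  proof
    assume "e = a"
    show thesis
    proof (rule that[of "y k" "y k"])
      show "\<forall>r\<in>{y k..y k + (a - y k)}. - (h ^ Suc k) \<le> m r" using m_ge_tail by simp
      show "\<forall>r\<in>{y k..y k + \<beta> ^ (Suc k + l) / 2}. \<nu> * h ^ k \<le> m r"
        using m_ge_step L x_Suc_eq[of k] unfolding L_def by simp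
    qed (use L \<open>e = a\<close> \<open>\<delta> \<le> y k\<close> \<open>y k < a\<close> a_plus_b a_less_b in \<open>auto simp: L_def\<close>)
  next
    assume "e = b"
    show thesis
    proof (rule that[of b "1 - y k - L / 2"])
      show "\<forall>r\<in>{b..b + (a - y k)}. - (h ^ Suc k) \<le> m r"
        using m_ge_tail_reflected a_plus_b by simp
      show "\<forall>r\<in>{1 - y k - L / 2..1 - y k - L / 2 + \<beta> ^ (Suc k + l) / 2}. \<nu> * h ^ k \<le> m r"
        using m_ge_step_reflected x_Suc_eq[of k] L unfolding L_def by simp
    qed (use L \<open>e = b\<close> \<open>\<delta> \<le> y k\<close> \<open>y k < a\<close> a_plus_b a_less_b \<delta>_pos in \<open>auto simp: L_def\<close>)
  qed
qed

lemma boundary_value_sq_le: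
  assumes s: "0 \<le> s" and M: "0 \<le> M" and bounded: "weighted_bounded d m s M phi dphi"
    and e: "e = a \<or> e = b"
  shows "(phi e)\<^sup>2 \<le> 8 / (\<delta> ^ (d - 1) * \<beta> ^ Suc l) * (exp (- 2 * s * \<nu> * h ^ k) / \<beta> ^ k)
      + 4 * \<beta> ^ Suc l * M / ((1 - \<beta>) * \<delta> ^ (d - 1)) * (\<beta> ^ k * exp (2 * s * h ^ Suc k))"
proof -
  define L where "L = \<beta> ^ (Suc k + l)"
  define W1 where "W1 = \<delta> ^ (d - 1) * exp (2 * s * - (h ^ Suc k))"
  define W2 where "W2 = \<delta> ^ (d - 1) * exp (2 * s * (\<nu> * h ^ k))"
  obtain p p1 where p: "\<delta> \<le> p" "p \<le> p1" "p1 + L / 2 \<le> p + (a - y k)" "p + (a - y k) \<le> 1"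
    "e \<in> {p..p + (a - y k)}" and m_ge: "\<forall>r\<in>{p..p + (a - y k)}. - (h ^ Suc k) \<le> m r"
    "\<forall>r\<in>{p1..p1 + L / 2}. \<nu> * h ^ k \<le> m r"
    using boundary_intervals[OF e, of k] unfolding L_def by blast
  have "0 < \<beta>" "0 < L" unfolding L_def using \<alpha>_pos \<alpha>_less_\<beta> by auto
  have H: "H1_pair 0 1 phi dphi"
    and norms: "set_integrable lborel {0..1} (\<lambda>r. r ^ (d - 1) * exp (2 * s * m r) * (phi r)\<^sup>2)"
    "(LBINT r:{0..1}. r ^ (d - 1) * exp (2 * s * m r) * (phi r)\<^sup>2) \<le> 1"
    "set_integrable lborel {0..1} (\<lambda>r. r ^ (d - 1) * exp (2 * s * m r) * (dphi r)\<^sup>2)"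
    "(LBINT r:{0..1}. r ^ (d - 1) * exp (2 * s * m r) * (dphi r)\<^sup>2) \<le> M"
    using bounded unfolding weighted_bounded_def by auto
  have "(phi e)\<^sup>2 \<le> 4 / (W2 * (p1 + L / 2 - p1)) + 2 * (p + (a - y k) - p) * M / W1"
  proof (rule sq_value_le_of_weighted_norms[OF H _ _ _ _ _ p(5) _ _ _ _ _ norms])
    show "\<forall>r\<in>{p..p + (a - y k)}. W1 \<le> r ^ (d - 1) * exp (2 * s * m r)"
      unfolding W1_def using m_ge(1) p by (intro ballI weight_ge[OF s \<delta>_pos]) auto
    show "\<forall>r\<in>{p1..p1 + L / 2}. W2 \<le> r ^ (d - 1) * exp (2 * s * m r)"
      unfolding W2_def using m_ge(2) p by (intro ballI weight_ge[OF s \<delta>_pos]) auto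
  qed (use p \<delta>_pos \<open>0 < L\<close> in \<open>auto simp: W1_def W2_def\<close>)
  also have "\<dots> \<le> 4 / (W2 * (L / 2)) + 2 * (2 * L / (1 - \<beta>)) * M / W1"
    using a_minus_y_le[of k] M \<delta>_pos unfolding L_def W1_def
    by (intro add_mono divide_right_mono mult_right_mono) auto
  also have "4 / (W2 * (L / 2)) = 8 / (\<delta> ^ (d - 1) * \<beta> ^ Suc l) * (exp (- 2 * s * \<nu> * h ^ k) / \<beta> ^ k)"
    using \<open>0 < \<beta>\<close> \<delta>_pos unfolding L_def W2_def
    by (simp add: power_add exp_minus' field_simps)
  also have "2 * (2 * L / (1 - \<beta>)) * M / W1
      = 4 * \<beta> ^ Suc l * M / ((1 - \<beta>) * \<delta> ^ (d - 1)) * (\<beta> ^ k * exp (2 * s * h ^ Suc k))"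
    using \<open>0 < \<beta>\<close> \<beta>_less_1 \<delta>_pos unfolding L_def W1_def
    by (simp add: power_add exp_minus' field_simps)
  finally show ?thesis .
qed

lemma eventually_boundary_values_small:
  assumes M: "0 \<le> M" and \<eta>: "0 < \<eta>"
  shows "eventually (\<lambda>s. \<forall>phi dphi. weighted_bounded d m s M phi dphi
    \<longrightarrow> (phi a)\<^sup>2 + (phi b)\<^sup>2 \<le> \<eta>) at_top"
proof -
  define C1 where "C1 = 8 / (\<delta> ^ (d - 1) * \<beta> ^ Suc l)"
  define C2 where "C2 = 4 * \<beta> ^ Suc l * M / ((1 - \<beta>) * \<delta> ^ (d - 1))"
  have "0 < \<beta>" using \<alpha>_pos \<alpha>_less_\<beta> by simp
  then have C: "0 \<le> C1" "0 \<le> C2" unfolding C1_def C2_def using \<delta>_pos \<beta>_less_1 M by auto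
  define \<epsilon> where "\<epsilon> = \<eta> / (2 * (C1 + C2 + 1))"
  have "0 < \<epsilon>" "2 * ((C1 + C2) * \<epsilon>) \<le> \<eta>" unfolding \<epsilon>_def using C \<eta> by (auto simp: field_simps)
  have "eventually (\<lambda>s. 0 \<le> s \<and> (\<exists>k. exp (- 2 * s * \<nu> * h ^ k) / \<beta> ^ k \<le> \<epsilon>
      \<and> \<beta> ^ k * exp (2 * s * h ^ Suc k) \<le> \<epsilon>)) at_top"
    by (rule eventually_conj[OF eventually_ge_at_top
          eventually_exists_index_small[OF h_pos h_less_1 \<open>0 < \<beta>\<close> \<beta>_less_1 \<nu>_gt_1 \<open>0 < \<epsilon>\<close>]])
  then show ?thesis
  proof (rule eventually_mono, intro allI impI)
    fix s phi dphi
    assume "0 \<le> s \<and> (\<exists>k. exp (- 2 * s * \<nu> * h ^ k) / \<beta> ^ k \<le> \<epsilon> \<and> \<beta> ^ k * exp (2 * s * h ^ Suc k) \<le> \<epsilon>)"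
    then obtain k where s: "0 \<le> s" and E: "exp (- 2 * s * \<nu> * h ^ k) / \<beta> ^ k \<le> \<epsilon>"
      "\<beta> ^ k * exp (2 * s * h ^ Suc k) \<le> \<epsilon>" by blast
    assume bounded: "weighted_bounded d m s M phi dphi"
    have bound: "(phi e)\<^sup>2 \<le> (C1 + C2) * \<epsilon>" if "e = a \<or> e = b" for e
    proof -
      have "(phi e)\<^sup>2 \<le> C1 * (exp (- 2 * s * \<nu> * h ^ k) / \<beta> ^ k) + C2 * (\<beta> ^ k * exp (2 * s * h ^ Suc k))"
        unfolding C1_def C2_def by (rule boundary_value_sq_le[OF s M bounded that])
      also have "\<dots> \<le> C1 * \<epsilon> + C2 * \<epsilon>" using E C by (intro add_mono mult_left_mono) auto
      finally show ?thesis by (simp add: algebra_simps)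
    qed
    show "(phi a)\<^sup>2 + (phi b)\<^sup>2 \<le> \<eta>"
      using bound[of a] bound[of b] \<open>2 * ((C1 + C2) * \<epsilon>) \<le> \<eta>\<close> by simp
  qed
qed

end

theorem proposition3p2:
  fixes d :: nat and a b :: real and m c :: "real \<Rightarrow> real"
  assumes d: "d \<ge> 1"
    and ab: "0 < a" "a < b" "b < 1" "a + b = 1"
    and m_C1: "C1_on {0..1} m"
    and m_nonconst: "\<not> (\<exists>k. \<forall>x\<in>{0..1}. m x = k)"
    and c_cont: "continuous_on {0..1} c"
    and H1_sym: "\<forall>r\<in>{0..1}. m r = m (1 - r)"
    and H1_zero: "\<forall>r\<in>{a..b}. m r = 0"
    and H2_pos: "\<forall>r\<in>{0..1}. c r > 0"
    and H2_big: "\<forall>r\<in>{0..a} \<union> {b..1}. c r > lambda_D d c a b"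
    and mS: "m \<in> S_D a b"
  shows "((\<lambda>s. lambda_s d m c s) \<longlongrightarrow> lambda_D d c a b) at_top"
proof -
  obtain m' \<delta> h \<alpha> \<beta> \<nu> and l :: nat where m': "C1_deriv_on {0..1} m m'"
    and step: "0 < \<delta>" "\<delta> < a" "0 < h" "h < \<alpha>" "\<alpha> < \<beta>" "\<beta> < 1" "1 < \<nu>"
    "(\<lambda>i. \<alpha> ^ (Suc i + l) + \<beta> ^ (Suc i + l)) sums (a - \<delta>)"
    and m_ge: "\<forall>r \<in> {\<delta>..<a} \<union> {b<..1 - \<delta>}. m r \<ge> tilde_m \<delta> h \<alpha> \<beta> \<nu> l r"
    using mS unfolding S_D_def by blast
  have "continuous_on {0..1} m"
    using m' unfolding C1_deriv_on_def continuous_on_eq_continuous_within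
    by (blast intro: DERIV_continuous)
  then interpret weighted_problem a b c m d
    using ab H2_pos c_cont H1_zero by unfold_locales auto
  have "0 < \<alpha>" "\<forall>r\<in>{\<delta>..<a}. tilde_m \<delta> h \<alpha> \<beta> \<nu> l r \<le> m r" using step m_ge by auto
  then interpret step_profile \<delta> \<alpha> \<beta> l a b h \<nu> m
    using step ab H1_sym H1_zero
    by (intro step_profile.intro step_partition.intro step_profile_axioms.intro)
  have lower: "eventually (\<lambda>s. lambda_D d c a b - \<epsilon> \<le> lambda_s d m c s) at_top" if "0 < \<epsilon>" for \<epsilon>
    using H2_big eventually_boundary_values_small that by (intro eventually_lambda_s_ge) auto
  have upper: "lambda_s d m c s \<le> lambda_D d c a b" for s
    using ab H1_zero H2_pos by (intro lambda_s_le_lambda_D) auto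
  show ?thesis
  proof (rule tendstoI)
    fix \<epsilon> :: real assume "0 < \<epsilon>"
    then show "eventually (\<lambda>s. dist (lambda_s d m c s) (lambda_D d c a b) < \<epsilon>) at_top"
      using lower[of "\<epsilon> / 2"] upper by (auto elim!: eventually_mono simp: dist_real_def)
  qed
qed

end
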